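(* Consider one round $t$ of the following federated learning protocol with $N$ clients and a trusted parameter server (PS), model dimension $m$, clipping threshold $C>0$, noise parameter $\sigma>0$ and sampling probability $p\in(0,1]$. Each client $i\in[N]$ holds a local dataset $\mathcal{D}_i$ and forms a batch $\mathcal{B}_{i,t}\subseteq\mathcal{D}_i$ by Poisson sampling (each sample is included independently with probability $p$); the average batch size is $B=p|\mathcal{D}_i|$. For each $d\in\mathcal{B}_{i,t}$ the client computes the per-sample gradient $\nabla\ell(\mathbf{w}_t,d)\in\mathbb{R}^m$ and clips it to $\nabla\ell(\mathbf{w}_t,d)/\max\{1,\|\nabla\ell(\mathbf{w}_t,d)\|_2/C\}$, and then forms $\bar{\mathbf{g}}_{i,t}=\frac{1}{B}\sum_{d\in\mathcal{B}_{i,t}}\nabla\ell(\mathbf{w}_t,d)$ (with clipped gradients). For each coordinate $j\in[m]$, client $i$ samples $v_{i,j}\sim\Gamma[3/2,1/2]$ (gamma distribution with shape $3/2$ and rate $1/2$), sets $\Delta_{i,j}=2\sigma\sqrt{v_{i,j}}$, samples $U_{i,j}\sim\mathrm{Unif}(-\Delta_{i,j}/2,\Delta_{i,j}/2)$, and sends to the PS the quantized value $Q_{\Delta_{i,j}}\big((\bar{\mathbf{g}}_{i,t})_j+U_{i,j}\big)$, where $Q_\Delta(x)=\mathrm{round}\!\left(\frac{x-\Delta/2}{\Delta}\right)\Delta+\frac{\Delta}{2}$ and $\mathrm{round}$ rounds to the nearest integer. All $v_{i,j}$ and $U_{i,j}$ are sampled independently (over $i$ and $j$) and are shared with the PS via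 common randomness between client $i$ and the PS, but are unknown to every other client. The PS forms the estimate $(\hat{\mathbf{g}}_{i,t})_j=Q_{\Delta_{i,j}}\big((\bar{\mathbf{g}}_{i,t})_j+U_{i,j}\big)-U_{i,j}$ and the global average $\mathbf{g}=\frac{1}{N}\sum_{i\in[N]}\hat{\mathbf{g}}_{i,t}$. Then, from the perspective of any party not having access to the shared randomness $(v_{i,j},U_{i,j})$, $\mathbf{g}$ is a noisy estimate of the average of the local gradients of the form $$\mathbf{g}=\frac{1}{N}\sum_{i\in[N]}\bar{\mathbf{g}}_{i,t}+\mathcal{N}\!\left(0,\frac{\sigma^2}{N}\mathbf{I}_m\right).$$ Hence, for every $\varepsilon'>0$, $\mathbf{g}$ satisfies sample-level $(\varepsilon,\delta)$-differential privacy against the clients with $\varepsilon=\log\big(1+p(e^{\varepsilon'}-1)\big)$ and $$\delta=p\cdot\Phi\!\left(\frac{C}{\sigma B\sqrt{N}}-\frac{\varepsilon'\sigma B\sqrt{N}}{2C}\right)-p\cdot e^{\varepsilon'}\Phi\!\left(-\frac{C}{\sigma B\sqrt{N}}-\frac{\varepsilon'\sigma B\sqrt{N}}{2C}\right),$$ where $\Phi$ is the CDF of the standard normal distribution.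
   Context: A randomized algorithm $\mathcal{M}$ satisfies $(\varepsilon,\delta)$-DP ($\varepsilon>0$, $\delta\in[0,1)$) if $\Pr[\mathcal{M}(\mathcal{D})\in\mathcal{O}]\le e^{\varepsilon}\Pr[\mathcal{M}(\mathcal{D}')\in\mathcal{O}]+\delta$ for all datasets $\mathcal{D},\mathcal{D}'$ differing in one sample and all measurable output sets $\mathcal{O}$. "Sample-level DP against clients" means the mechanism mapping the union of the clients' datasets to $\mathbf{g}$ (with randomness from Poisson sampling and from the $v_{i,j},U_{i,j}$, which are hidden) satisfies this definition, where neighboring datasets differ in a single data sample. The loss gradient $\nabla\ell(\mathbf{w}_t,d)$ is the gradient of the per-sample loss with respect to the current model parameters $\mathbf{w}_t\in\mathbb{R}^m$. *)

theory Defs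
  imports "HOL-Probability.Probability"
begin

definition gamma_density :: "real \<Rightarrow> real \<Rightarrow> real \<Rightarrow> real" where
  "gamma_density k r x = (if 0 < x then r powr k * x powr (k - 1) * exp (- r * x) / Gamma k else 0)"

definition Phi :: "real \<Rightarrow> real" where
  "Phi x = measure (density lborel std_normal_density) {..x}"

definition clip :: "real \<Rightarrow> real ^ 'm \<Rightarrow> real ^ 'm" where
  "clip C x = (1 / max 1 (norm x / C)) *\<^sub>R x"

definition quant :: "real \<Rightarrow> real \<Rightarrow> real" where
  "quant \<Delta> x = real_of_int (round ((x - \<Delta>/2) / \<Delta>)) * \<Delta> + \<Delta>/2"

definition step :: "real \<Rightarrow> real \<Rightarrow> real" where
  "step \<sigma> v = 2 * \<sigma> * sqrt v"

text \<open>Joint law of one pair (v, U): v ~ Gamma(3/2, rate 1/2) and, given v,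
  U ~ Unif(-Delta/2, Delta/2) with Delta = step sigma v.\<close>
definition pair_law :: "real \<Rightarrow> (real \<times> real) measure" where
  "pair_law \<sigma> = density lborel (\<lambda>(v, u). ennreal (gamma_density (3/2) (1/2) v *
      (if 0 < v \<and> - step \<sigma> v / 2 < u \<and> u < step \<sigma> v / 2 then 1 / step \<sigma> v else 0)))"

definition shared_rand :: "nat \<Rightarrow> real \<Rightarrow> ((nat \<times> 'm::finite) \<Rightarrow> real \<times> real) measure" where
  "shared_rand N \<sigma> = PiM ({..<N} \<times> UNIV) (\<lambda>_. pair_law \<sigma>)"

definition aggregate :: "nat \<Rightarrow> real \<Rightarrow> (nat \<Rightarrow> real ^ 'm::finite) \<Rightarrow>
    ((nat \<times> 'm) \<Rightarrow> real \<times> real) \<Rightarrow> real ^ 'm" where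
  "aggregate N \<sigma> gbar \<omega> = (1 / real N) *\<^sub>R (\<Sum>i<N. (\<chi> j.
      quant (step \<sigma> (fst (\<omega> (i, j)))) (gbar i $ j + snd (\<omega> (i, j))) - snd (\<omega> (i, j))))"

text \<open>Poisson sampling masks: sample k of client i is in the batch iff b (i,k).\<close>
definition poisson_masks :: "real \<Rightarrow> nat \<Rightarrow> (nat \<Rightarrow> 'd list) \<Rightarrow> ((nat \<times> nat) \<Rightarrow> bool) measure" where
  "poisson_masks p N D = PiM {(i, k). i < N \<and> k < length (D i)} (\<lambda>_. measure_pmf (bernoulli_pmf p))"

definition local_grad :: "real \<Rightarrow> real \<Rightarrow> ('d \<Rightarrow> real ^ 'm) \<Rightarrow> (nat \<Rightarrow> 'd list) \<Rightarrow>
    ((nat \<times> nat) \<Rightarrow> bool) \<Rightarrow> nat \<Rightarrow> real ^ 'm" where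
  "local_grad C B grad D b i = (1 / B) *\<^sub>R (\<Sum>k\<in>{k. k < length (D i) \<and> b (i, k)}. clip C (grad (D i ! k)))"

definition mechanism :: "nat \<Rightarrow> real \<Rightarrow> real \<Rightarrow> real \<Rightarrow> real \<Rightarrow> ('d \<Rightarrow> real ^ 'm::finite) \<Rightarrow>
    (nat \<Rightarrow> 'd list) \<Rightarrow> (real ^ 'm) measure" where
  "mechanism N C \<sigma> p B grad D =
     distr (poisson_masks p N D \<Otimes>\<^sub>M shared_rand N \<sigma>) borel
       (\<lambda>(b, \<omega>). aggregate N \<sigma> (local_grad C B grad D b) \<omega>)"

definition neighbours :: "nat \<Rightarrow> (nat \<Rightarrow> 'd list) \<Rightarrow> (nat \<Rightarrow> 'd list) \<Rightarrow> bool" where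
  "neighbours N D D' \<longleftrightarrow> (\<exists>i0<N. \<exists>k<length (D i0). \<exists>d'.
      D' i0 = (D i0)[k := d'] \<and> (\<forall>i<N. i \<noteq> i0 \<longrightarrow> D' i = D i))"

definition gaussian_vec :: "real ^ 'm::finite \<Rightarrow> real \<Rightarrow> (real ^ 'm) measure" where
  "gaussian_vec \<mu> s = density lborel (\<lambda>x. ennreal (\<Prod>j\<in>UNIV. normal_density (\<mu> $ j) s (x $ j)))"

end

(*
  Each coordinate of the aggregate is exactly Gaussian: the Gamma(3/2, rate 1/2) law of v is the
  mixing law under which the uniform densities on (-sigma sqrt v, sigma sqrt v) average to the
  N(0, sigma^2) density, and subtractive dithering makes Q_Delta(g + U) - U uniform on
  (g - Delta/2, g + Delta/2) whatever g is. So every estimate is g plus independent N(0, sigma^2)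
  noise, and averaging over N clients leaves noise of deviation sigma / sqrt N per coordinate.

  For privacy, condition on all Poisson coins except the one of the replaced sample. Given them,
  the output is Gaussian, and including, omitting or replacing that sample moves its mean by at
  most 2C/(NB). Between two Gaussians at distance r times their deviation the optimal delta for
  a given epsilon is Phi(r/2 - epsilon/r) - e^epsilon Phi(-r/2 - epsilon/r), attained on a half-space
  and increasing in r; mixing over the remaining coin, which is heads with probability p,
  amplifies this to log(1 + p(e^epsilon' - 1)) and p times the same delta.
*)
theory Submission
  imports Defs "HOL-Real_Asymp.Real_Asymp"
begin

section \<open>Gaussian vectors and the Gaussian mechanism\<close>

lemma borel_measurable_vec_lambda[measurable (raw)]:
  fixes f :: "'a \<Rightarrow> 'm::finite \<Rightarrow> real"
  assumes "\<And>j. (\<lambda>x. f x j) \<in> borel_measurable M"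
  shows "(\<lambda>x. \<chi> j. f x j) \<in> borel_measurable M"
proof (subst borel_measurable_euclidean_space, intro ballI)
  fix i :: "real^'m" assume "i \<in> Basis"
  then obtain j where i: "i = axis j 1" by (auto simp: Basis_vec_def)
  show "(\<lambda>x. (\<chi> j. f x j) \<bullet> i) \<in> borel_measurable M"
    using assms[of j] by (simp add: i inner_axis)
qed

lemma lborel_vec_eq_distr_PiM:
  "(lborel :: (real^'m::finite) measure) = distr (PiM UNIV (\<lambda>_. lborel)) borel (\<lambda>f. \<chi> j. f j)"
proof (rule lborel_eqI)
  interpret product_sigma_finite "\<lambda>_::'m. lborel :: real measure" by standard
  fix l u :: "real^'m" assume le: "\<And>b. b \<in> Basis \<Longrightarrow> l \<bullet> b \<le> u \<bullet> b"
  have le': "l $ j \<le> u $ j" for j using le[of "axis j 1"] by (auto simp: inner_axis Basis_vec_def)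
  have meas: "(\<lambda>f. \<chi> j. f j) \<in> measurable (PiM UNIV (\<lambda>_. lborel)) (borel :: (real^'m) measure)"
    by measurable
  have pre: "(\<lambda>f. \<chi> j. f j) -` box l u \<inter> space (PiM UNIV (\<lambda>_. lborel)) = PiE UNIV (\<lambda>j. {l$j<..<u$j})"
    by (auto simp: mem_box_cart space_PiM PiE_def Pi_def)
  have "emeasure (distr (PiM UNIV (\<lambda>_. lborel)) borel (\<lambda>f. \<chi> j. f j)) (box l u)
      = emeasure (PiM UNIV (\<lambda>_. lborel)) (PiE UNIV (\<lambda>j. {l$j<..<u$j}))"
    using meas by (subst emeasure_distr) (auto simp: pre)
  also have "\<dots> = (\<Prod>j\<in>UNIV. emeasure lborel {l$j<..<u$j})"
    by (rule emeasure_PiM) auto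
  also have "\<dots> = ennreal (\<Prod>j\<in>UNIV. u$j - l$j)"
    using le' by (simp add: prod_ennreal)
  also have "(\<Prod>j\<in>UNIV. u$j - l$j) = (\<Prod>b\<in>Basis. (u - l) \<bullet> b)"
  proof -
    have "(\<Prod>b\<in>Basis. (u - l) \<bullet> b) = (\<Prod>b\<in>(\<lambda>j. axis j (1::real)) ` UNIV. (u - l) \<bullet> b)"
      by (rule arg_cong[where f="prod _"]) (auto simp: Basis_vec_def)
    also have "\<dots> = (\<Prod>j\<in>UNIV. (u - l) \<bullet> axis j 1)"
      by (subst prod.reindex) (auto simp: inj_on_def axis_eq_axis)
    finally show ?thesis by (simp add: inner_axis)
  qed
  finally show "emeasure (distr (PiM UNIV (\<lambda>_. lborel)) borel (\<lambda>f. \<chi> j. f j)) (box l u)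
      = (\<Prod>b\<in>Basis. (u - l) \<bullet> b)"
    using le by (simp add: prod_nonneg)
qed simp

lemma density_PiM_lborel_prod:
  fixes f :: "'i \<Rightarrow> real \<Rightarrow> real"
  assumes I: "finite I"
    and [measurable]: "\<And>i. f i \<in> borel_measurable borel"
    and nonneg: "\<And>i x. 0 \<le> f i x"
    and prob: "\<And>i. prob_space (density lborel (f i))"
  shows "density (PiM I (\<lambda>_. lborel)) (\<lambda>x. ennreal (\<Prod>i\<in>I. f i (x i)))
       = PiM I (\<lambda>i. density lborel (f i))"
proof -
  interpret L: product_sigma_finite "\<lambda>_::'i. lborel :: real measure" by standard
  interpret D: product_prob_space "\<lambda>i. density lborel (f i)"
    by (intro product_prob_spaceI prob)
  show ?thesis
  proof (rule D.PiM_eqI[OF I])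
    fix A assume "\<And>i. i \<in> I \<Longrightarrow> A i \<in> sets (density lborel (f i))"
    then have A[measurable]: "\<And>i. i \<in> I \<Longrightarrow> A i \<in> sets borel" by simp
    have ind: "indicator (PiE I A) x = (\<Prod>i\<in>I. indicator (A i) (x i) :: ennreal)"
      if x: "x \<in> space (PiM I (\<lambda>_. lborel :: real measure))" for x
    proof (cases "\<forall>i\<in>I. x i \<in> A i")
      case True
      then show ?thesis using x by (auto simp: space_PiM PiE_iff)
    next
      case False
      then obtain i where i: "i \<in> I" "x i \<notin> A i" by blast
      then have "x \<notin> PiE I A" by (auto simp: PiE_iff)
      moreover have "(\<Prod>i\<in>I. indicator (A i) (x i) :: ennreal) = 0"
        using I i by (intro prod_zero) (auto intro!: bexI[of _ i])
      ultimately show ?thesis by simp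
    qed
    have "emeasure (density (PiM I (\<lambda>_. lborel)) (\<lambda>x. ennreal (\<Prod>i\<in>I. f i (x i)))) (PiE I A)
        = (\<integral>\<^sup>+x. ennreal (\<Prod>i\<in>I. f i (x i)) * indicator (PiE I A) x \<partial>PiM I (\<lambda>_. lborel))"
      using I by (intro emeasure_density sets_PiM_I_finite) auto
    also have "\<dots> = (\<integral>\<^sup>+x. (\<Prod>i\<in>I. ennreal (f i (x i)) * indicator (A i) (x i)) \<partial>PiM I (\<lambda>_. lborel))"
      using nonneg by (intro nn_integral_cong) (simp only: ind, simp add: prod_ennreal[symmetric] prod.distrib)
    also have "\<dots> = (\<Prod>i\<in>I. \<integral>\<^sup>+x. ennreal (f i x) * indicator (A i) x \<partial>lborel)"
      by (intro L.product_nn_integral_prod I) auto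
    also have "\<dots> = (\<Prod>i\<in>I. emeasure (density lborel (f i)) (A i))"
      by (intro prod.cong refl) (simp add: emeasure_density)
    finally show "emeasure (density (PiM I (\<lambda>_. lborel)) (\<lambda>x. ennreal (\<Prod>i\<in>I. f i (x i)))) (PiE I A)
        = (\<Prod>i\<in>I. emeasure (density lborel (f i)) (A i))" .
  qed (simp only: sets_density, intro sets_PiM_cong; simp)
qed

lemma indep_vars_PiM_components:
  assumes "I \<noteq> {}" and M: "\<And>i. i \<in> I \<Longrightarrow> prob_space (M i)"
  shows "prob_space.indep_vars (PiM I M) M (\<lambda>i \<omega>. \<omega> i) I"
proof -
  interpret P: prob_space "PiM I M" by (rule prob_space_PiM) (rule M)
  have "distr (PiM I M) (PiM I M) (\<lambda>\<omega>. \<lambda>k\<in>I. \<omega> k) = distr (PiM I M) (PiM I M) (\<lambda>\<omega>. \<omega>)"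
    by (rule distr_cong) (auto simp: space_PiM PiE_def extensional_def restrict_def fun_eq_iff)
  also have "\<dots> = PiM I (\<lambda>k. distr (PiM I M) (M k) (\<lambda>\<omega>. \<omega> k))"
    by (auto intro!: PiM_cong distr_PiM_component[symmetric] M)
  finally show ?thesis
    using assms(1) by (subst P.indep_vars_iff_distr_eq_PiM') auto
qed

definition gaussian_vec_density :: "real ^ 'm::finite \<Rightarrow> real \<Rightarrow> real ^ 'm \<Rightarrow> real" where
  "gaussian_vec_density \<mu> s x = (\<Prod>j\<in>UNIV. normal_density (\<mu> $ j) s (x $ j))"

lemma gaussian_vec_density_nonneg: "0 \<le> gaussian_vec_density \<mu> s x"
  unfolding gaussian_vec_density_def by (intro prod_nonneg) auto

lemma borel_measurable_gaussian_vec_density[measurable]: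
  "gaussian_vec_density \<mu> s \<in> borel_measurable borel"
  unfolding gaussian_vec_density_def by measurable

lemma gaussian_vec_eq_density: "gaussian_vec \<mu> s = density lborel (gaussian_vec_density \<mu> s)"
  unfolding gaussian_vec_def gaussian_vec_density_def ..

lemma gaussian_vec_eq_distr_PiM:
  fixes \<mu> :: "real ^ 'm::finite"
  assumes "0 < s"
  shows "gaussian_vec \<mu> s
       = distr (PiM UNIV (\<lambda>j. density lborel (normal_density (\<mu> $ j) s))) borel (\<lambda>f. \<chi> j. f j)"
proof -
  have "gaussian_vec \<mu> s = density (distr (PiM UNIV (\<lambda>_. lborel)) borel (\<lambda>f. \<chi> j. f j))
       (\<lambda>x. ennreal (\<Prod>j\<in>UNIV. normal_density (\<mu> $ j) s (x $ j)))"
    unfolding gaussian_vec_def by (subst lborel_vec_eq_distr_PiM) rule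
  also have "\<dots> = distr (density (PiM UNIV (\<lambda>_. lborel))
      (\<lambda>f. ennreal (\<Prod>j\<in>UNIV. normal_density (\<mu> $ j) s ((\<chi> j. f j) $ j)))) borel (\<lambda>f. \<chi> j. f j)"
    by (rule density_distr) measurable
  also have "(\<lambda>f. ennreal (\<Prod>j\<in>UNIV. normal_density (\<mu> $ j) s ((\<chi> j. f j) $ j)))
      = (\<lambda>f. ennreal (\<Prod>j\<in>UNIV. normal_density (\<mu> $ j) s (f j)))"
    by simp
  also have "density (PiM UNIV (\<lambda>_. lborel)) (\<lambda>f. ennreal (\<Prod>j\<in>UNIV. normal_density (\<mu> $ j) s (f j)))
      = PiM UNIV (\<lambda>j. density lborel (normal_density (\<mu> $ j) s))"
    by (rule density_PiM_lborel_prod) (auto intro: prob_space_normal_density assms)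
  finally show ?thesis .
qed

lemma prob_space_gaussian_vec: "0 < s \<Longrightarrow> prob_space (gaussian_vec \<mu> s)"
  by (subst gaussian_vec_eq_distr_PiM)
     (auto intro!: prob_space.prob_space_distr prob_space_PiM prob_space_normal_density)

lemma (in prob_space) distr_vec_indep_normal:
  fixes Z :: "'m::finite \<Rightarrow> 'a \<Rightarrow> real"
  assumes "0 < s" and indep: "indep_vars (\<lambda>_. borel) Z UNIV"
    and normal: "\<And>j. distributed M lborel (Z j) (normal_density (\<mu> $ j) s)"
  shows "distr M borel (\<lambda>\<omega>. \<chi> j. Z j \<omega>) = gaussian_vec \<mu> s"
proof -
  have [measurable]: "Z j \<in> borel_measurable M" for j
    using normal[of j] by (simp add: distributed_def)
  have Z: "distr M borel (Z j) = density lborel (normal_density (\<mu> $ j) s)" for j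
    using normal[of j] by (simp add: distributed_def cong: distr_cong)
  have "distr M borel (\<lambda>\<omega>. \<chi> j. Z j \<omega>) = distr M borel (\<lambda>\<omega>. (\<lambda>f. \<chi> j. f j) (\<lambda>j\<in>UNIV. Z j \<omega>))"
    by simp
  also have "\<dots> = distr (distr M (PiM UNIV (\<lambda>_. borel)) (\<lambda>\<omega>. \<lambda>j\<in>UNIV. Z j \<omega>)) borel (\<lambda>f. \<chi> j. f j)"
    by (subst distr_distr) (simp_all add: comp_def)
  also have "distr M (PiM UNIV (\<lambda>_. borel)) (\<lambda>\<omega>. \<lambda>j\<in>UNIV. Z j \<omega>) = PiM UNIV (\<lambda>j. distr M borel (Z j))"
    using indep by (subst (asm) indep_vars_iff_distr_eq_PiM') auto
  finally show ?thesis
    using assms(1) by (simp add: Z gaussian_vec_eq_distr_PiM)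
qed

lemma continuous_on_std_normal_density: "continuous_on S std_normal_density"
proof -
  have "std_normal_density = (\<lambda>x. (1 / sqrt (2 * pi)) * exp (- x\<^sup>2 / 2))"
    by (rule ext) (rule std_normal_density_def)
  then show ?thesis by (simp only:) (intro continuous_intros, auto)
qed

lemma Phi_eq_plus_integral:
  assumes "a \<le> y"
  shows "Phi y = Phi a + integral {a..y} std_normal_density"
proof -
  interpret P: prob_space "density lborel std_normal_density"
    by (rule prob_space_normal_density) simp
  have int: "(std_normal_density has_integral integral {a..y} std_normal_density) {a..y}"
    by (intro integrable_integral integrable_continuous_interval continuous_on_std_normal_density)
  have "emeasure (density lborel std_normal_density) {a<..y}
      = (\<integral>\<^sup>+x. ennreal (std_normal_density x) * indicator {a..y} x \<partial>lborel)"
    using AE_lborel_singleton[of a]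
    by (subst emeasure_density, simp_all, intro nn_integral_cong_AE, eventually_elim)
       (auto simp: indicator_def)
  also have "\<dots> = ennreal (integral {a..y} std_normal_density)"
    by (rule nn_integral_has_integral_lebesgue'[OF _ int]) simp
  finally have "measure (density lborel std_normal_density) {a<..y} = integral {a..y} std_normal_density"
    using integral_nonneg[OF has_integral_integrable[OF int]] by (simp add: measure_def)
  moreover have "{..y} = {..a} \<union> {a<..y}" and "{..a} \<inter> {a<..y} = {}"
    using assms by auto
  ultimately show ?thesis
    using P.finite_measure_Union[of "{..a}" "{a<..y}"] by (simp add: Phi_def)
qed

lemma Phi_has_real_derivative: "(Phi has_real_derivative std_normal_density x) (at x)"
proof -
  have "((\<lambda>y. integral {x - 1..y} std_normal_density) has_real_derivative std_normal_density x)
      (at x within {x - 1..x + 1})"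
    by (rule integral_has_real_derivative[OF continuous_on_std_normal_density]) auto
  then have "((\<lambda>y. Phi (x - 1) + integral {x - 1..y} std_normal_density) has_real_derivative std_normal_density x) (at x)"
    by (auto simp: at_within_Icc_at intro!: derivative_eq_intros)
  then show ?thesis
    by (rule has_field_derivative_transform_within_open[where S="{x - 1<..<x + 1}"])
       (auto intro!: Phi_eq_plus_integral[symmetric])
qed

lemma measure_normal_greaterThan:
  assumes b: "0 < b"
  shows "measure (density lborel (normal_density a b)) {t<..} = Phi ((a - t) / b)"
proof -
  have "emeasure (density lborel (normal_density a b)) {t<..}
      = (\<integral>\<^sup>+z. ennreal (normal_density a b z) * indicator {t<..} z \<partial>lborel)"
    by (simp add: emeasure_density)
  also have "\<dots> = ennreal \<bar>- b\<bar> * (\<integral>\<^sup>+y. ennreal (normal_density a b (a + (- b) * y))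
      * indicator {t<..} (a + (- b) * y) \<partial>lborel)"
    by (rule nn_integral_real_affine) (use b in auto)
  also have "\<dots> = (\<integral>\<^sup>+y. ennreal (std_normal_density y) * indicator {..(a - t) / b} y \<partial>lborel)"
  proof -
    have "b * normal_density a b (a + (- b) * y) = std_normal_density y" for y
      using b by (simp add: normal_density_def power_mult_distrib real_sqrt_mult field_simps)
    moreover have "(t < a + (- b) * y) \<longleftrightarrow> y < (a - t) / b" for y
      using b by (simp add: field_simps)
    ultimately have "ennreal b * (ennreal (normal_density a b (a + (- b) * y)) * indicator {t<..} (a + (- b) * y))
        = ennreal (std_normal_density y) * indicator {..<(a - t) / b} y" for y
      using b by (auto simp: indicator_def ennreal_mult'[symmetric])
    then have "ennreal \<bar>- b\<bar> * (\<integral>\<^sup>+y. ennreal (normal_density a b (a + (- b) * y))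
        * indicator {t<..} (a + (- b) * y) \<partial>lborel)
        = (\<integral>\<^sup>+y. ennreal (std_normal_density y) * indicator {..<(a - t) / b} y \<partial>lborel)"
      using b by (simp add: nn_integral_cmult[symmetric] mult.assoc[symmetric])
    also have "\<dots> = (\<integral>\<^sup>+y. ennreal (std_normal_density y) * indicator {..(a - t) / b} y \<partial>lborel)"
      using AE_lborel_singleton[of "(a - t) / b"]
      by (intro nn_integral_cong_AE, eventually_elim) (auto simp: indicator_def)
    finally show ?thesis .
  qed
  also have "\<dots> = emeasure (density lborel std_normal_density) {..(a - t) / b}"
    by (simp add: emeasure_density)
  finally show ?thesis
    by (simp add: measure_def Phi_def)
qed

definition gaussian_delta :: "real \<Rightarrow> real \<Rightarrow> real" where
  "gaussian_delta \<epsilon> r = Phi (r/2 - \<epsilon>/r) - exp \<epsilon> * Phi (- r/2 - \<epsilon>/r)"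

lemma gaussian_delta_mono:
  assumes "0 < r1" and "r1 \<le> r2"
  shows "gaussian_delta \<epsilon> r1 \<le> gaussian_delta \<epsilon> r2"
proof (rule DERIV_nonneg_imp_nondecreasing[OF assms(2)])
  fix x assume "r1 \<le> x"
  then have x: "0 < x" using assms(1) by simp
  have "((\<lambda>r. r/2 - \<epsilon>/r) has_real_derivative (1/2 + \<epsilon>/x\<^sup>2)) (at x)"
    and "((\<lambda>r. - r/2 - \<epsilon>/r) has_real_derivative (-1/2 + \<epsilon>/x\<^sup>2)) (at x)"
    using x by (auto intro!: derivative_eq_intros simp: power2_eq_square field_simps)
  then have "(gaussian_delta \<epsilon> has_real_derivative
      std_normal_density (x/2 - \<epsilon>/x) * (1/2 + \<epsilon>/x\<^sup>2)
      - exp \<epsilon> * (std_normal_density (- x/2 - \<epsilon>/x) * (-1/2 + \<epsilon>/x\<^sup>2))) (at x)"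
    unfolding gaussian_delta_def[abs_def]
    by (intro DERIV_diff DERIV_cmult DERIV_chain2[OF Phi_has_real_derivative])
  \<comment> \<open>The two normal densities agree after weighting by exp \<epsilon>, so the derivative collapses
    to the first density.\<close>
  moreover have "std_normal_density (x/2 - \<epsilon>/x) = exp \<epsilon> * std_normal_density (- x/2 - \<epsilon>/x)"
  proof -
    have "- (x/2 - \<epsilon>/x)\<^sup>2 / 2 = \<epsilon> + (- (- x/2 - \<epsilon>/x)\<^sup>2 / 2)"
      using x by (simp add: power2_eq_square field_simps)
    then have "exp (- (x/2 - \<epsilon>/x)\<^sup>2 / 2) = exp \<epsilon> * exp (- (- x/2 - \<epsilon>/x)\<^sup>2 / 2)"
      by (simp only: exp_add)
    then show ?thesis unfolding std_normal_density_def by simp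
  qed
  ultimately show "\<exists>y. (gaussian_delta \<epsilon> has_real_derivative y) (at x) \<and> 0 \<le> y"
    by (intro exI[of _ "std_normal_density (x/2 - \<epsilon>/x)"]) (simp add: algebra_simps)
qed

lemma (in prob_space) distributed_weighted_sum_indep_normal:
  assumes J: "finite J" "J \<noteq> {}" and indep: "indep_vars (\<lambda>_. borel) Y J" and s: "0 < s"
    and w: "\<And>j. j \<in> J \<Longrightarrow> w j \<noteq> 0"
    and normal: "\<And>j. j \<in> J \<Longrightarrow> distributed M lborel (Y j) (normal_density (\<mu> j) s)"
  shows "distributed M lborel (\<lambda>\<omega>. \<Sum>j\<in>J. w j * Y j \<omega>)
           (normal_density (\<Sum>j\<in>J. w j * \<mu> j) (s * sqrt (\<Sum>j\<in>J. (w j)\<^sup>2)))"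
proof -
  have "indep_vars (\<lambda>_. borel) (\<lambda>j \<omega>. (\<lambda>y. w j * y) (Y j \<omega>)) J"
    by (rule indep_vars_compose2[OF indep]) measurable
  moreover have "distributed M lborel (\<lambda>\<omega>. w j * Y j \<omega>) (normal_density (w j * \<mu> j) (\<bar>w j\<bar> * s))"
    if "j \<in> J" for j
    using normal_density_affine[OF normal[OF that] s w[OF that], of 0] by simp
  ultimately have "distributed M lborel (\<lambda>\<omega>. \<Sum>j\<in>J. w j * Y j \<omega>)
      (normal_density (\<Sum>j\<in>J. w j * \<mu> j) (sqrt (\<Sum>j\<in>J. (\<bar>w j\<bar> * s)\<^sup>2)))"
    using J s w by (intro sum_indep_normal) auto
  moreover have "sqrt (\<Sum>j\<in>J. (\<bar>w j\<bar> * s)\<^sup>2) = s * sqrt (\<Sum>j\<in>J. (w j)\<^sup>2)"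
    using s by (simp add: power_mult_distrib sum_distrib_right[symmetric] real_sqrt_mult)
  ultimately show ?thesis by simp
qed

lemma measure_gaussian_vec_halfspace:
  fixes \<mu> w :: "real ^ 'm::finite"
  assumes s: "0 < s" and w: "w \<noteq> 0"
  shows "measure (gaussian_vec \<mu> s) {x. t < w \<bullet> x} = Phi ((w \<bullet> \<mu> - t) / (s * norm w))"
proof -
  let ?Q = "PiM (UNIV :: 'm set) (\<lambda>j. density lborel (normal_density (\<mu> $ j) s))"
  interpret Q: prob_space ?Q by (intro prob_space_PiM prob_space_normal_density s)
  define J where "J = {j. w $ j \<noteq> 0}"
  have "J \<noteq> {}" using w unfolding J_def by (auto simp: vec_eq_iff)
  have sum_J: "(\<Sum>j\<in>UNIV. w $ j * f j) = (\<Sum>j\<in>J. w $ j * f j)" for f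
    by (rule sum.mono_neutral_right) (auto simp: J_def)
  have "Q.indep_vars (\<lambda>j. density lborel (normal_density (\<mu> $ j) s)) (\<lambda>j y. y j) UNIV"
    by (rule indep_vars_PiM_components) (auto intro: prob_space_normal_density s)
  then have indep: "Q.indep_vars (\<lambda>_. borel) (\<lambda>j y. y j) J"
    by (rule Q.indep_vars_subset[OF Q.indep_vars_compose2[where Y="\<lambda>_ x. x"], simplified]) auto
  have coord: "distributed ?Q lborel (\<lambda>y. y j) (normal_density (\<mu> $ j) s)" for j
  proof -
    have "distr ?Q lborel (\<lambda>y. y j) = distr ?Q (density lborel (normal_density (\<mu> $ j) s)) (\<lambda>y. y j)"
      by (rule distr_cong) simp_all
    also have "\<dots> = density lborel (normal_density (\<mu> $ j) s)"
      by (intro distr_PiM_component prob_space_normal_density s) simp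
    finally show ?thesis unfolding distributed_def by simp
  qed
  have "distributed ?Q lborel (\<lambda>y. \<Sum>j\<in>J. w $ j * y j)
      (normal_density (\<Sum>j\<in>J. w $ j * \<mu> $ j) (s * sqrt (\<Sum>j\<in>J. (w $ j)\<^sup>2)))"
    using \<open>J \<noteq> {}\<close> s
    by (intro Q.distributed_weighted_sum_indep_normal indep coord) (auto simp: J_def)
  moreover have "(\<Sum>j\<in>J. (w $ j)\<^sup>2) = (\<Sum>j\<in>UNIV. (w $ j)\<^sup>2)"
    using sum_J[of "\<lambda>j. w $ j"] by (simp add: power2_eq_square)
  ultimately have T: "distributed ?Q lborel (\<lambda>y. \<Sum>j\<in>UNIV. w $ j * y j) (normal_density (w \<bullet> \<mu>) (s * norm w))"
    by (simp add: sum_J inner_vec_def norm_vec_def L2_set_def)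
  have "measure (gaussian_vec \<mu> s) {x. t < w \<bullet> x}
      = measure ?Q ((\<lambda>f. \<chi> j. f j) -` {x. t < w \<bullet> x} \<inter> space ?Q)"
    by (subst gaussian_vec_eq_distr_PiM[OF s]) (rule measure_distr; measurable)
  also have "(\<lambda>f. \<chi> j. f j) -` {x. t < w \<bullet> x} \<inter> space ?Q = (\<lambda>y. \<Sum>j\<in>UNIV. w $ j * y j) -` {t<..} \<inter> space ?Q"
    by (auto simp: inner_vec_def)
  also have "measure ?Q \<dots> = measure (distr ?Q lborel (\<lambda>y. \<Sum>j\<in>UNIV. w $ j * y j)) {t<..}"
    by (rule measure_distr[symmetric]) auto
  also have "\<dots> = Phi ((w \<bullet> \<mu> - t) / (s * norm w))"
    using T s w by (simp add: distributed_def measure_normal_greaterThan)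
  finally show ?thesis .
qed

lemma measure_density_scaled_mono:
  fixes f g :: "'a \<Rightarrow> real"
  assumes "finite_measure (density M f)" "finite_measure (density M g)"
    and [measurable]: "f \<in> borel_measurable M" "g \<in> borel_measurable M" "A \<in> sets M"
    and a: "0 \<le> a" and b: "0 \<le> b" and le: "\<And>x. x \<in> A \<Longrightarrow> a * f x \<le> b * g x"
  shows "a * measure (density M f) A \<le> b * measure (density M g) A"
proof -
  have "ennreal (a * measure (density M f) A) = ennreal a * emeasure (density M f) A"
    using assms(1) a by (simp add: ennreal_mult' finite_measure.emeasure_eq_measure)
  also have "\<dots> = (\<integral>\<^sup>+x. ennreal (a * f x) * indicator A x \<partial>M)"
    using a by (simp add: emeasure_density nn_integral_cmult[symmetric] ennreal_mult' mult.assoc)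
  also have "\<dots> \<le> (\<integral>\<^sup>+x. ennreal (b * g x) * indicator A x \<partial>M)"
    using le by (intro nn_integral_mono) (simp add: indicator_def ennreal_leI)
  also have "\<dots> = ennreal b * emeasure (density M g) A"
    using b by (simp add: emeasure_density nn_integral_cmult[symmetric] ennreal_mult' mult.assoc)
  also have "\<dots> = ennreal (b * measure (density M g) A)"
    using assms(2) b by (simp add: ennreal_mult' finite_measure.emeasure_eq_measure)
  finally show ?thesis
    using b by (simp add: ennreal_le_iff)
qed

text \<open>H is a Neyman-Pearson set of the likelihood ratio f/g at level c, so no event has a larger
  excess of the measure with density f over c times the measure with density g.\<close>

lemma measure_density_le_likelihood_set:
  fixes f g :: "'a \<Rightarrow> real"
  assumes fin: "finite_measure (density M f)" "finite_measure (density M g)"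
    and [measurable]: "f \<in> borel_measurable M" "g \<in> borel_measurable M" "H \<in> sets M" "S \<in> sets M"
    and c: "0 \<le> c"
    and on_H: "\<And>x. x \<in> H \<Longrightarrow> c * g x \<le> f x"
    and off_H: "\<And>x. x \<in> space M - H \<Longrightarrow> f x \<le> c * g x"
  shows "measure (density M f) S
       \<le> c * measure (density M g) S + (measure (density M f) H - c * measure (density M g) H)"
proof -
  let ?P = "measure (density M f)" and ?Q = "measure (density M g)"
  have "c * ?Q (H - S) \<le> 1 * ?P (H - S)"
    using fin c on_H by (intro measure_density_scaled_mono) auto
  moreover have "1 * ?P (S - H) \<le> c * ?Q (S - H)"
    using fin c off_H sets.sets_into_space[of S M] by (intro measure_density_scaled_mono) auto
  moreover have "?P S = ?P (S \<inter> H) + ?P (S - H)" "?P H = ?P (S \<inter> H) + ?P (H - S)"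
    using fin(1) by (simp_all add: finite_measure.finite_measure_Diff' Int_commute)
  moreover have "?Q S = ?Q (S \<inter> H) + ?Q (S - H)" "?Q H = ?Q (S \<inter> H) + ?Q (H - S)"
    using fin(2) by (simp_all add: finite_measure.finite_measure_Diff' Int_commute)
  ultimately show ?thesis
    by (simp add: algebra_simps)
qed

lemma normal_density_shift:
  assumes "0 < s"
  shows "normal_density a s y = normal_density b s y * exp ((a - b) * (y - (a + b) / 2) / s\<^sup>2)"
proof -
  have "- (y - a)\<^sup>2 / (2 * s\<^sup>2) = - (y - b)\<^sup>2 / (2 * s\<^sup>2) + (a - b) * (y - (a + b) / 2) / s\<^sup>2"
    using assms by (simp add: power2_eq_square field_simps)
  then show ?thesis unfolding normal_density_def by (simp add: mult_exp_exp algebra_simps)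
qed

lemma gaussian_vec_density_shift:
  fixes \<mu> \<nu> :: "real ^ 'm::finite"
  assumes "0 < s"
  shows "gaussian_vec_density \<mu> s x
       = gaussian_vec_density \<nu> s x * exp ((\<mu> - \<nu>) \<bullet> (x - (1/2) *\<^sub>R (\<mu> + \<nu>)) / s\<^sup>2)"
proof -
  have "gaussian_vec_density \<mu> s x = (\<Prod>j\<in>UNIV. normal_density (\<nu> $ j) s (x $ j)
      * exp ((\<mu> $ j - \<nu> $ j) * (x $ j - (\<mu> $ j + \<nu> $ j) / 2) / s\<^sup>2))"
    unfolding gaussian_vec_density_def using assms by (intro prod.cong refl normal_density_shift)
  also have "\<dots> = gaussian_vec_density \<nu> s x
      * exp (\<Sum>j\<in>UNIV. (\<mu> $ j - \<nu> $ j) * (x $ j - (\<mu> $ j + \<nu> $ j) / 2) / s\<^sup>2)"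
    by (simp add: prod.distrib gaussian_vec_density_def exp_sum)
  also have "(\<Sum>j\<in>UNIV. (\<mu> $ j - \<nu> $ j) * (x $ j - (\<mu> $ j + \<nu> $ j) / 2) / s\<^sup>2)
      = (\<mu> - \<nu>) \<bullet> (x - (1/2) *\<^sub>R (\<mu> + \<nu>)) / s\<^sup>2"
    unfolding inner_vec_def sum_divide_distrib by (intro sum.cong) simp_all
  finally show ?thesis .
qed

lemma gaussian_vec_hockey_stick:
  fixes \<mu> \<nu> :: "real ^ 'm::finite"
  assumes s: "0 < s" and "\<mu> \<noteq> \<nu>" and [measurable]: "S \<in> sets borel"
  shows "measure (gaussian_vec \<mu> s) S
           \<le> exp \<epsilon> * measure (gaussian_vec \<nu> s) S + gaussian_delta \<epsilon> (norm (\<mu> - \<nu>) / s)"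
    and "0 \<le> gaussian_delta \<epsilon> (norm (\<mu> - \<nu>) / s)"
proof -
  define w where "w = \<mu> - \<nu>"
  define m where "m = (1/2) *\<^sub>R (\<mu> + \<nu>)"
  define r where "r = norm w / s"
  define H where "H = {x. s\<^sup>2 * \<epsilon> + w \<bullet> m < w \<bullet> x}"
  have w: "w \<noteq> 0" using assms(2) by (simp add: w_def)
  have r: "0 < r" using w s by (simp add: r_def)
  have [measurable]: "H \<in> sets borel" unfolding H_def by measurable
  let ?f = "gaussian_vec_density \<mu> s" and ?g = "gaussian_vec_density \<nu> s"
  have ratio: "?f x = ?g x * exp ((w \<bullet> x - w \<bullet> m) / s\<^sup>2)" for x
    using gaussian_vec_density_shift[OF s, of \<mu> x \<nu>] by (simp add: w_def m_def inner_diff_right)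
  have on_H: "exp \<epsilon> * ?g x \<le> ?f x" if "x \<in> H" for x
  proof -
    have "exp \<epsilon> \<le> exp ((w \<bullet> x - w \<bullet> m) / s\<^sup>2)" using that s by (simp add: H_def field_simps)
    then show ?thesis
      unfolding ratio by (subst mult.commute, intro mult_right_mono gaussian_vec_density_nonneg)
  qed
  have off_H: "?f x \<le> exp \<epsilon> * ?g x" if "x \<notin> H" for x
  proof -
    have "exp ((w \<bullet> x - w \<bullet> m) / s\<^sup>2) \<le> exp \<epsilon>" using that s by (simp add: H_def field_simps)
    from mult_left_mono[OF this gaussian_vec_density_nonneg[of \<nu> s x]] show ?thesis
      unfolding ratio by (simp only: mult.commute)
  qed
  have num_mu: "w \<bullet> \<mu> - (s\<^sup>2 * \<epsilon> + w \<bullet> m) = (norm w)\<^sup>2 / 2 - s\<^sup>2 * \<epsilon>"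
    and num_nu: "w \<bullet> \<nu> - (s\<^sup>2 * \<epsilon> + w \<bullet> m) = - (norm w)\<^sup>2 / 2 - s\<^sup>2 * \<epsilon>"
    by (simp_all add: w_def m_def power2_norm_eq_inner algebra_simps inner_simps inner_commute)
  have arg_mu: "((norm w)\<^sup>2 / 2 - s\<^sup>2 * \<epsilon>) / (s * norm w) = r/2 - \<epsilon>/r"
    and arg_nu: "(- (norm w)\<^sup>2 / 2 - s\<^sup>2 * \<epsilon>) / (s * norm w) = - r/2 - \<epsilon>/r"
    using s w by (simp_all add: r_def power2_eq_square field_simps)
  have "measure (gaussian_vec \<mu> s) H = Phi (r/2 - \<epsilon>/r)"
    using measure_gaussian_vec_halfspace[OF s w, where t="s\<^sup>2 * \<epsilon> + w \<bullet> m" and \<mu>=\<mu>]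
    unfolding H_def num_mu arg_mu .
  moreover have "measure (gaussian_vec \<nu> s) H = Phi (- r/2 - \<epsilon>/r)"
    using measure_gaussian_vec_halfspace[OF s w, where t="s\<^sup>2 * \<epsilon> + w \<bullet> m" and \<mu>=\<nu>]
    unfolding H_def num_nu arg_nu .
  ultimately have delta: "gaussian_delta \<epsilon> (norm (\<mu> - \<nu>) / s)
      = measure (gaussian_vec \<mu> s) H - exp \<epsilon> * measure (gaussian_vec \<nu> s) H"
    by (simp add: gaussian_delta_def r_def w_def)
  have fin: "finite_measure (density lborel ?f)" "finite_measure (density lborel ?g)"
    using prob_space.axioms(1)[OF prob_space_gaussian_vec[OF s]] by (simp_all add: gaussian_vec_eq_density)
  show "measure (gaussian_vec \<mu> s) S
      \<le> exp \<epsilon> * measure (gaussian_vec \<nu> s) S + gaussian_delta \<epsilon> (norm (\<mu> - \<nu>) / s)"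
    unfolding delta gaussian_vec_eq_density
    by (rule measure_density_le_likelihood_set[OF fin]) (use on_H off_H in auto)
  have "exp \<epsilon> * measure (density lborel ?g) H \<le> 1 * measure (density lborel ?f) H"
    using fin on_H by (intro measure_density_scaled_mono) auto
  then show "0 \<le> gaussian_delta \<epsilon> (norm (\<mu> - \<nu>) / s)"
    unfolding delta gaussian_vec_eq_density by simp
qed

lemma gaussian_delta_nonneg:
  assumes "0 < r"
  shows "0 \<le> gaussian_delta \<epsilon> r"
proof -
  have "0 \<le> gaussian_delta \<epsilon> (norm (r *\<^sub>R axis undefined 1 - (0 :: real ^ 1)) / 1)"
    using assms by (intro gaussian_vec_hockey_stick(2)[where S=UNIV]) auto
  then show ?thesis
    using assms by simp
qed

lemma gaussian_vec_dp_bound: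
  fixes \<mu> \<nu> :: "real ^ 'm::finite"
  assumes s: "0 < s" and "0 < \<Delta>" "0 \<le> \<epsilon>" "norm (\<mu> - \<nu>) \<le> \<Delta>" "S \<in> sets borel"
  shows "measure (gaussian_vec \<mu> s) S \<le> exp \<epsilon> * measure (gaussian_vec \<nu> s) S + gaussian_delta \<epsilon> (\<Delta> / s)"
proof (cases "\<mu> = \<nu>")
  case True
  have "measure (gaussian_vec \<mu> s) S \<le> exp \<epsilon> * measure (gaussian_vec \<mu> s) S"
    using mult_right_mono[of 1 "exp \<epsilon>" "measure (gaussian_vec \<mu> s) S"] assms(3) by simp
  then show ?thesis
    using True gaussian_delta_nonneg[of "\<Delta> / s" \<epsilon>] assms by simp
next
  case False
  then have "gaussian_delta \<epsilon> (norm (\<mu> - \<nu>) / s) \<le> gaussian_delta \<epsilon> (\<Delta> / s)"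
    using s assms(4) by (intro gaussian_delta_mono divide_right_mono) auto
  then show ?thesis
    using gaussian_vec_hockey_stick(1)[OF s False assms(5), of \<epsilon>] by simp
qed

section \<open>Subtractive dithering with a Gamma-distributed step\<close>

lemma quant_eq_floor: "quant \<Delta> x = real_of_int \<lfloor>x / \<Delta>\<rfloor> * \<Delta> + \<Delta> / 2"
proof (cases "\<Delta> = 0")
  case False
  then have "(x - \<Delta> / 2) / \<Delta> + 1/2 = x / \<Delta>" by (simp add: field_simps)
  then show ?thesis by (simp add: quant_def round_def)
qed (simp add: quant_def)

lemma borel_measurable_quant[measurable]:
  assumes [measurable]: "f \<in> borel_measurable M" "g \<in> borel_measurable M"
  shows "(\<lambda>x. quant (f x) (g x)) \<in> borel_measurable M"
  unfolding quant_eq_floor by measurable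

lemma nn_integral_reflect_interval:
  fixes f :: "real \<Rightarrow> ennreal"
  assumes [measurable]: "f \<in> borel_measurable borel"
  shows "(\<integral>\<^sup>+u. indicator {a<..<b} u * f (c - u) \<partial>lborel) = (\<integral>\<^sup>+w. indicator {c-b<..<c-a} w * f w \<partial>lborel)"
proof -
  have "(\<integral>\<^sup>+w. indicator {c-b<..<c-a} w * f w \<partial>lborel)
      = ennreal \<bar>-1\<bar> * (\<integral>\<^sup>+u. indicator {c-b<..<c-a} (c + (-1) * u) * f (c + (-1) * u) \<partial>lborel)"
    by (rule nn_integral_real_affine) auto
  also have "(\<lambda>u. indicator {c-b<..<c-a} (c + (-1) * u) * f (c + (-1) * u)) = (\<lambda>u. indicator {a<..<b} u * f (c - u))"
    by (auto simp: indicator_def fun_eq_iff)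
  finally show ?thesis by simp
qed

lemma nn_integral_subtractive_dither:
  fixes f :: "real \<Rightarrow> ennreal"
  assumes \<Delta>: "0 < \<Delta>" and [measurable]: "f \<in> borel_measurable borel"
  shows "(\<integral>\<^sup>+u. indicator {-\<Delta>/2<..<\<Delta>/2} u * f (quant \<Delta> (g + u) - u) \<partial>lborel)
       = (\<integral>\<^sup>+w. indicator {g-\<Delta>/2<..<g+\<Delta>/2} w * f w \<partial>lborel)"
proof -
  define n where "n = \<lfloor>(g + \<Delta>/2) / \<Delta>\<rfloor>"
  define p where "p = real_of_int n * \<Delta>"
  have n: "real_of_int n \<le> (g + \<Delta>/2) / \<Delta>" "(g + \<Delta>/2) / \<Delta> < real_of_int n + 1"
    unfolding n_def by linarith+
  have p: "p \<le> g + \<Delta>/2" "g + \<Delta>/2 < p + \<Delta>"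
    using n \<Delta> unfolding p_def by (simp_all add: field_simps)
  \<comment> \<open>The grid point p splits the dither interval into two pieces, on each of which
    the estimate is a reflection u \<mapsto> const - u.\<close>
  have lo: "quant \<Delta> (g + u) - u = p - \<Delta>/2 - u" if "-\<Delta>/2 < u" "u < p - g" for u
  proof -
    have "\<lfloor>(g + u) / \<Delta>\<rfloor> = n - 1"
      using that p \<Delta> by (intro floor_unique) (simp_all add: p_def field_simps)
    then have floor_eq: "real_of_int \<lfloor>(g + u) / \<Delta>\<rfloor> = real_of_int n - 1" by simp
    show ?thesis unfolding quant_eq_floor floor_eq p_def by (simp add: algebra_simps)
  qed
  have hi: "quant \<Delta> (g + u) - u = p + \<Delta>/2 - u" if "p - g < u" "u < \<Delta>/2" for u
  proof -
    have "\<lfloor>(g + u) / \<Delta>\<rfloor> = n"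
      using that p \<Delta> by (intro floor_unique) (simp_all add: p_def field_simps)
    then show ?thesis by (simp add: quant_eq_floor p_def algebra_simps)
  qed
  have "(\<integral>\<^sup>+u. indicator {-\<Delta>/2<..<\<Delta>/2} u * f (quant \<Delta> (g + u) - u) \<partial>lborel)
      = (\<integral>\<^sup>+u. indicator {-\<Delta>/2<..<p-g} u * f (p - \<Delta>/2 - u)
             + indicator {p-g<..<\<Delta>/2} u * f (p + \<Delta>/2 - u) \<partial>lborel)"
    using AE_lborel_singleton[of "p - g"]
    by (intro nn_integral_cong_AE, eventually_elim)
       (use lo hi p in \<open>auto simp: indicator_def not_less_iff_gr_or_eq\<close>)
  also have "\<dots> = (\<integral>\<^sup>+u. indicator {-\<Delta>/2<..<p-g} u * f (p - \<Delta>/2 - u) \<partial>lborel)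
      + (\<integral>\<^sup>+u. indicator {p-g<..<\<Delta>/2} u * f (p + \<Delta>/2 - u) \<partial>lborel)"
    by (rule nn_integral_add) measurable
  also have "\<dots> = (\<integral>\<^sup>+w. indicator {g-\<Delta>/2<..<p} w * f w \<partial>lborel)
      + (\<integral>\<^sup>+w. indicator {p<..<g+\<Delta>/2} w * f w \<partial>lborel)"
    by (simp add: nn_integral_reflect_interval add.commute)
  also have "\<dots> = (\<integral>\<^sup>+w. indicator {g-\<Delta>/2<..<p} w * f w + indicator {p<..<g+\<Delta>/2} w * f w \<partial>lborel)"
    by (rule nn_integral_add[symmetric]) measurable
  also have "\<dots> = (\<integral>\<^sup>+w. indicator {g-\<Delta>/2<..<g+\<Delta>/2} w * f w \<partial>lborel)"
    using AE_lborel_singleton[of p]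
    by (intro nn_integral_cong_AE, eventually_elim) (use p \<Delta> in \<open>auto simp: indicator_def\<close>)
  finally show ?thesis .
qed

lemma Gamma_three_halves: "Gamma (3/2 :: real) = sqrt pi / 2"
proof -
  have "(1/2::real) \<notin> \<int>\<^sub>\<le>\<^sub>0"
    by (auto elim!: nonpos_Ints_cases)
  then have "Gamma (1/2 + 1 :: real) = 1/2 * Gamma (1/2)"
    by (rule Gamma_plus1)
  then show ?thesis by (simp add: Gamma_one_half_real)
qed

definition pair_density :: "real \<Rightarrow> real \<Rightarrow> real \<Rightarrow> real" where
  "pair_density \<sigma> v u = gamma_density (3/2) (1/2) v *
      (if 0 < v \<and> - step \<sigma> v / 2 < u \<and> u < step \<sigma> v / 2 then 1 / step \<sigma> v else 0)"

lemma pair_law_eq_density: "pair_law \<sigma> = density lborel (\<lambda>(v, u). ennreal (pair_density \<sigma> v u))"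
  unfolding pair_law_def pair_density_def ..

lemma borel_measurable_pair_density[measurable]:
  assumes [measurable]: "f \<in> borel_measurable M" "g \<in> borel_measurable M"
  shows "(\<lambda>x. pair_density \<sigma> (f x) (g x)) \<in> borel_measurable M"
  unfolding pair_density_def gamma_density_def step_def by measurable

lemma pair_density_eq:
  assumes \<sigma>: "0 < \<sigma>"
  shows "pair_density \<sigma> v u = exp (- v / 2) / (2 * \<sigma> * sqrt (2 * pi)) * indicator {u\<^sup>2 / \<sigma>\<^sup>2<..} v"
proof (cases "0 < v")
  case False
  moreover have "v \<notin> {u\<^sup>2 / \<sigma>\<^sup>2<..}"
    using False by (simp add: not_less) (meson divide_nonneg_nonneg order_trans zero_le_power2)
  ultimately show ?thesis by (simp add: pair_density_def gamma_density_def)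
next
  case v: True
  have "(- step \<sigma> v / 2 < u \<and> u < step \<sigma> v / 2) \<longleftrightarrow> \<bar>u\<bar> < \<sigma> * sqrt v"
    by (auto simp: step_def abs_less_iff)
  also have "\<dots> \<longleftrightarrow> u\<^sup>2 < (\<sigma> * sqrt v)\<^sup>2"
    using abs_le_square_iff[of "\<sigma> * sqrt v" u] \<sigma> v by (simp add: not_le[symmetric] abs_mult)
  also have "\<dots> \<longleftrightarrow> u\<^sup>2 / \<sigma>\<^sup>2 < v"
    using \<sigma> v by (simp add: power_mult_distrib field_simps)
  finally have in_support: "(- step \<sigma> v / 2 < u \<and> u < step \<sigma> v / 2) \<longleftrightarrow> u\<^sup>2 / \<sigma>\<^sup>2 < v" .
  have "(1/2::real) powr (3/2) = (1/2) powr 1 * (1/2) powr (1/2)"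
    by (subst powr_add[symmetric]) simp
  then have "(1/2::real) powr (3/2) = 1 / (2 * sqrt 2)"
    by (simp add: powr_half_sqrt real_sqrt_divide)
  moreover have "v powr (3/2 - 1) = sqrt v"
    using v by (simp add: powr_half_sqrt)
  ultimately have "gamma_density (3/2) (1/2) v / step \<sigma> v = exp (- v / 2) / (2 * \<sigma> * sqrt (2 * pi))"
    using v \<sigma> by (simp add: gamma_density_def step_def Gamma_three_halves real_sqrt_mult field_simps)
  then show ?thesis
    using v in_support by (simp add: pair_density_def indicator_def)
qed

lemma nn_integral_pair_density:
  assumes \<sigma>: "0 < \<sigma>"
  shows "(\<integral>\<^sup>+v. ennreal (pair_density \<sigma> v u) \<partial>lborel) = ennreal (normal_density 0 \<sigma> u)"
proof -
  define K where "K = 1 / (2 * \<sigma> * sqrt (2 * pi))"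
  define a where "a = u\<^sup>2 / \<sigma>\<^sup>2"
  have K: "0 < K" using \<sigma> by (simp add: K_def)
  have "(\<integral>\<^sup>+v. ennreal (pair_density \<sigma> v u) \<partial>lborel)
      = (\<integral>\<^sup>+v. ennreal (K * exp (- v / 2)) * indicator {a..} v \<partial>lborel)"
    using AE_lborel_singleton[of a]
    by (intro nn_integral_cong_AE, eventually_elim)
       (auto simp: pair_density_eq[OF \<sigma>] K_def a_def indicator_def)
  also have "\<dots> = ennreal (0 - (- 2 * K * exp (- a / 2)))"
  proof (rule nn_integral_FTC_atLeast)
    show "DERIV (\<lambda>x. - 2 * K * exp (- x / 2)) x :> K * exp (- x / 2)" for x
      by (auto intro!: derivative_eq_intros)
    show "((\<lambda>x. - 2 * K * exp (- x / 2)) \<longlongrightarrow> 0) at_top"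
      by real_asymp
  qed (use K in auto)
  also have "0 - (- 2 * K * exp (- a / 2)) = normal_density 0 \<sigma> u"
    using \<sigma> by (simp add: normal_density_def K_def a_def real_sqrt_mult field_simps)
  finally show ?thesis .
qed

definition dither_estimate :: "real \<Rightarrow> real \<Rightarrow> real \<times> real \<Rightarrow> real" where
  "dither_estimate \<sigma> g = (\<lambda>(v, u). quant (step \<sigma> v) (g + u) - u)"

lemma borel_measurable_dither_estimate[measurable]:
  shows "dither_estimate \<sigma> g \<in> borel_measurable (borel \<Otimes>\<^sub>M borel)"
    and "dither_estimate \<sigma> g \<in> borel_measurable borel"
proof -
  show "dither_estimate \<sigma> g \<in> borel_measurable (borel \<Otimes>\<^sub>M borel)"
    unfolding dither_estimate_def step_def by measurable
  then show "dither_estimate \<sigma> g \<in> borel_measurable borel"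
    by (simp add: borel_prod)
qed

lemma sets_pair_law[simp, measurable_cong]: "sets (pair_law \<sigma>) = sets borel"
  by (simp add: pair_law_def)

lemma nn_integral_pair_density_dither:
  assumes \<sigma>: "0 < \<sigma>" and [measurable]: "A \<in> sets borel"
  shows "(\<integral>\<^sup>+u. ennreal (pair_density \<sigma> v u) * indicator A (dither_estimate \<sigma> g (v, u)) \<partial>lborel)
       = (\<integral>\<^sup>+w. ennreal (pair_density \<sigma> v (w - g)) * indicator A w \<partial>lborel)"
proof (cases "0 < v")
  case False
  then show ?thesis by (simp add: pair_density_def)
next
  case True
  define \<Delta> where "\<Delta> = step \<sigma> v"
  have \<Delta>: "0 < \<Delta>" using \<sigma> True by (simp add: \<Delta>_def step_def)
  define c where "c = gamma_density (3/2) (1/2) v * (1 / \<Delta>)"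
  have uniform: "ennreal (pair_density \<sigma> v u) = ennreal c * indicator {-\<Delta>/2<..<\<Delta>/2} u" for u
    using True by (simp add: pair_density_def c_def \<Delta>_def indicator_def)
  have shifted: "ennreal (pair_density \<sigma> v (w - g)) = ennreal c * indicator {g-\<Delta>/2<..<g+\<Delta>/2} w" for w
    using True by (auto simp: pair_density_def c_def \<Delta>_def indicator_def)
  have "(\<integral>\<^sup>+u. ennreal (pair_density \<sigma> v u) * indicator A (dither_estimate \<sigma> g (v, u)) \<partial>lborel)
      = ennreal c * (\<integral>\<^sup>+u. indicator {-\<Delta>/2<..<\<Delta>/2} u * indicator A (quant \<Delta> (g + u) - u) \<partial>lborel)"
    unfolding uniform dither_estimate_def
    by (subst nn_integral_cmult[symmetric]) (measurable, simp add: mult.assoc \<Delta>_def)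
  also have "\<dots> = ennreal c * (\<integral>\<^sup>+w. indicator {g-\<Delta>/2<..<g+\<Delta>/2} w * indicator A w \<partial>lborel)"
    using \<Delta> by (subst nn_integral_subtractive_dither) auto
  also have "\<dots> = (\<integral>\<^sup>+w. ennreal (pair_density \<sigma> v (w - g)) * indicator A w \<partial>lborel)"
    unfolding shifted by (subst nn_integral_cmult[symmetric]) (measurable, simp add: mult.assoc)
  finally show ?thesis .
qed

lemma distr_dither_estimate:
  assumes \<sigma>: "0 < \<sigma>"
  shows "distr (pair_law \<sigma>) borel (dither_estimate \<sigma> g) = density lborel (normal_density g \<sigma>)"
proof (rule measure_eqI)
  fix A assume "A \<in> sets (distr (pair_law \<sigma>) borel (dither_estimate \<sigma> g))"
  then have A[measurable]: "A \<in> sets borel" by simp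
  have [measurable]: "(\<lambda>(v, u). ennreal (pair_density \<sigma> v u)) \<in> borel_measurable (borel :: (real \<times> real) measure)"
  proof -
    have "(\<lambda>(v, u). ennreal (pair_density \<sigma> v u)) \<in> borel_measurable (borel \<Otimes>\<^sub>M borel)"
      by measurable
    then show ?thesis by (simp add: borel_prod)
  qed
  have "emeasure (distr (pair_law \<sigma>) borel (dither_estimate \<sigma> g)) A
      = (\<integral>\<^sup>+x. ennreal (pair_density \<sigma> (fst x) (snd x)) * indicator A (dither_estimate \<sigma> g x) \<partial>lborel)"
  proof -
    have "dither_estimate \<sigma> g -` A \<in> sets borel"
      using measurable_sets[OF borel_measurable_dither_estimate(2) A] by simp
    then show ?thesis
      unfolding pair_law_eq_density
      by (subst emeasure_distr, simp_all, subst emeasure_density)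
         (auto intro!: nn_integral_cong simp: indicator_def split: prod.splits)
  qed
  also have "\<dots> = (\<integral>\<^sup>+v. \<integral>\<^sup>+u. ennreal (pair_density \<sigma> v u) * indicator A (dither_estimate \<sigma> g (v, u))
      \<partial>lborel \<partial>lborel)"
  proof -
    have "(\<lambda>x. ennreal (pair_density \<sigma> (fst x) (snd x)) * indicator A (dither_estimate \<sigma> g x))
        \<in> borel_measurable (borel \<Otimes>\<^sub>M borel)"
      by measurable
    then show ?thesis
      unfolding lborel_prod[symmetric]
      by (subst lborel.nn_integral_fst[symmetric])
         (simp_all add: measurable_cong_sets[OF sets_pair_measure_cong[OF sets_lborel sets_lborel] refl])
  qed
  also have "\<dots> = (\<integral>\<^sup>+v. \<integral>\<^sup>+w. ennreal (pair_density \<sigma> v (w - g)) * indicator A w \<partial>lborel \<partial>lborel)"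
    using \<sigma> by (simp add: nn_integral_pair_density_dither)
  also have "\<dots> = (\<integral>\<^sup>+w. \<integral>\<^sup>+v. ennreal (pair_density \<sigma> v (w - g)) * indicator A w \<partial>lborel \<partial>lborel)"
    by (rule lborel_pair.Fubini'[symmetric]) measurable
  also have "\<dots> = (\<integral>\<^sup>+w. ennreal (normal_density g \<sigma> w) * indicator A w \<partial>lborel)"
    using \<sigma> by (simp add: nn_integral_multc nn_integral_pair_density normal_density_def)
  also have "\<dots> = emeasure (density lborel (normal_density g \<sigma>)) A"
    by (simp add: emeasure_density)
  finally show "emeasure (distr (pair_law \<sigma>) borel (dither_estimate \<sigma> g)) A
      = emeasure (density lborel (normal_density g \<sigma>)) A" .
qed simp

lemma prob_space_pair_law:
  assumes "0 < \<sigma>"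
  shows "prob_space (pair_law \<sigma>)"
proof
  have "emeasure (pair_law \<sigma>) (space (pair_law \<sigma>))
      = emeasure (distr (pair_law \<sigma>) borel (dither_estimate \<sigma> 0)) UNIV"
    by (subst emeasure_distr) (auto simp: pair_law_def)
  then show "emeasure (pair_law \<sigma>) (space (pair_law \<sigma>)) = 1"
    using assms prob_space.emeasure_space_1[OF prob_space_normal_density[OF assms, of 0]]
    by (simp add: distr_dither_estimate)
qed

lemma prob_space_shared_rand: "0 < \<sigma> \<Longrightarrow> prob_space (shared_rand N \<sigma>)"
  unfolding shared_rand_def by (intro prob_space_PiM prob_space_pair_law)

lemma measurable_shared_rand_component[measurable]:
  "i < N \<Longrightarrow> (\<lambda>\<omega>. \<omega> (i, j)) \<in> measurable (shared_rand N \<sigma>) (pair_law \<sigma>)"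
  unfolding shared_rand_def by (intro measurable_component_singleton) auto

lemma measurable_dither_estimate_pair_law[measurable]:
  "dither_estimate \<sigma> g \<in> borel_measurable (pair_law \<sigma>)"
  using borel_measurable_dither_estimate(2) by (simp cong: measurable_cong_sets)

lemma measurable_aggregate[measurable]:
  "aggregate N \<sigma> gbar \<in> borel_measurable (shared_rand N \<sigma>)"
proof -
  have "aggregate N \<sigma> gbar = (\<lambda>\<omega>. \<chi> j. (1 / real N) * (\<Sum>i<N. dither_estimate \<sigma> (gbar i $ j) (\<omega> (i, j))))"
    by (simp add: fun_eq_iff aggregate_def dither_estimate_def split_beta vec_eq_iff sum_distrib_left)
  then show ?thesis
    by (simp only:, intro borel_measurable_vec_lambda borel_measurable_times borel_measurable_const
        borel_measurable_sum measurable_compose[OF measurable_shared_rand_component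
        measurable_dither_estimate_pair_law]) auto
qed

lemma (in prob_space) distributed_mean_indep_normal:
  assumes "finite I" "I \<noteq> {}" "indep_vars (\<lambda>_. borel) X I" "0 < \<sigma>"
    and "\<And>i. i \<in> I \<Longrightarrow> distributed M lborel (X i) (normal_density (\<mu> i) \<sigma>)"
  shows "distributed M lborel (\<lambda>\<omega>. (\<Sum>i\<in>I. X i \<omega>) / real (card I))
           (normal_density ((\<Sum>i\<in>I. \<mu> i) / real (card I)) (\<sigma> / sqrt (real (card I))))"
proof -
  have n: "0 < real (card I)" using assms(1,2) by (simp add: card_gt_0_iff)
  have "distributed M lborel (\<lambda>\<omega>. \<Sum>i\<in>I. X i \<omega>) (normal_density (\<Sum>i\<in>I. \<mu> i) (sqrt (\<Sum>i\<in>I. \<sigma>\<^sup>2)))"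
    using assms by (intro sum_indep_normal) auto
  then have "distributed M lborel (\<lambda>\<omega>. 0 + (1 / real (card I)) * (\<Sum>i\<in>I. X i \<omega>))
      (normal_density (0 + (1 / real (card I)) * (\<Sum>i\<in>I. \<mu> i)) (\<bar>1 / real (card I)\<bar> * sqrt (\<Sum>i\<in>I. \<sigma>\<^sup>2)))"
    using assms(4) n by (intro normal_density_affine) auto
  moreover have "\<bar>1 / real (card I)\<bar> * sqrt (\<Sum>i\<in>I. \<sigma>\<^sup>2) = \<sigma> / sqrt (real (card I))"
  proof -
    define r where "r = sqrt (real (card I))"
    have r: "0 < r" "real (card I) = r * r"
      using n by (simp_all add: r_def)
    have "sqrt (\<Sum>i\<in>I. \<sigma>\<^sup>2) = r * \<sigma>"
      using assms(4) by (simp add: r_def real_sqrt_mult)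
    then show ?thesis
      unfolding r(2) r_def[symmetric] using r(1) by (simp add: field_simps)
  qed
  ultimately show ?thesis by simp
qed

lemma distr_aggregate:
  fixes gbar :: "nat \<Rightarrow> real ^ 'm::finite"
  assumes \<sigma>: "0 < \<sigma>" and N: "N \<ge> 1"
  shows "distr (shared_rand N \<sigma>) borel (aggregate N \<sigma> gbar)
       = gaussian_vec ((1 / real N) *\<^sub>R (\<Sum>i<N. gbar i)) (\<sigma> / sqrt (real N))"
proof -
  let ?K = "{..<N} \<times> (UNIV :: 'm set)"
  let ?SR = "shared_rand N \<sigma> :: ((nat \<times> 'm) \<Rightarrow> real \<times> real) measure"
  interpret SR: prob_space ?SR by (rule prob_space_shared_rand[OF \<sigma>])
  define g where "g k = gbar (fst k) $ snd k" for k
  define X where "X k \<omega> = dither_estimate \<sigma> (g k) (\<omega> k)" for k and \<omega> :: "(nat \<times> 'm) \<Rightarrow> real \<times> real"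
  define Z where "Z j \<omega> = (\<Sum>k\<in>{..<N} \<times> {j}. X k \<omega>) / real N" for j \<omega>
  have component: "distr ?SR (pair_law \<sigma>) (\<lambda>\<omega>. \<omega> k) = pair_law \<sigma>" if "k \<in> ?K" for k
    unfolding shared_rand_def using that by (intro distr_PiM_component prob_space_pair_law[OF \<sigma>])
  have "SR.indep_vars (\<lambda>_. pair_law \<sigma>) (\<lambda>k \<omega>. \<omega> k) ?K"
    unfolding shared_rand_def using N
    by (intro indep_vars_PiM_components prob_space_pair_law[OF \<sigma>]) (auto simp: lessThan_empty_iff)
  then have indep_X: "SR.indep_vars (\<lambda>_. borel) X ?K"
    unfolding X_def by (rule SR.indep_vars_compose2) simp
  have X: "distributed ?SR lborel (X k) (normal_density (g k) \<sigma>)" if k: "k \<in> ?K" for k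
  proof -
    obtain i j where ij: "k = (i, j)" "i < N" using k by auto
    have [measurable]: "X k \<in> borel_measurable ?SR"
      unfolding X_def ij(1) using ij(2) by measurable
    have "distr ?SR lborel (X k) = distr ?SR borel (X k)"
      by (rule distr_cong) simp_all
    also have "\<dots> = distr (distr ?SR (pair_law \<sigma>) (\<lambda>\<omega>. \<omega> k)) borel (dither_estimate \<sigma> (g k))"
      using ij by (subst distr_distr) (simp_all add: comp_def X_def[abs_def])
    also have "\<dots> = density lborel (normal_density (g k) \<sigma>)"
      by (simp only: component[OF k] distr_dither_estimate[OF \<sigma>])
    finally show ?thesis
      by (simp add: distributed_def)
  qed
  have sum_coord: "(\<Sum>k\<in>{..<N} \<times> {j}. f k) = (\<Sum>i<N. f (i, j))" for f :: "nat \<times> 'm \<Rightarrow> real" and j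
    by (simp add: sum.cartesian_product')
  have Z: "distributed ?SR lborel (Z j) (normal_density (((1 / real N) *\<^sub>R (\<Sum>i<N. gbar i)) $ j) (\<sigma> / sqrt (real N)))" for j
  proof -
    have "(0, j) \<in> {..<N} \<times> {j}" using N by simp
    then have "{..<N} \<times> {j} \<noteq> {}" by blast
    then have "distributed ?SR lborel (Z j)
        (normal_density ((\<Sum>k\<in>{..<N} \<times> {j}. g k) / real N) (\<sigma> / sqrt (real N)))"
      unfolding Z_def using SR.distributed_mean_indep_normal[of "{..<N} \<times> {j}" X \<sigma> g] \<sigma>
      by (auto intro: SR.indep_vars_subset[OF indep_X] X simp: card_cartesian_product)
    then show ?thesis by (simp add: sum_coord g_def)
  qed
  have indep_Z: "SR.indep_vars (\<lambda>_. borel) Z UNIV"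
  proof -
    have "SR.indep_vars (\<lambda>j. PiM ({..<N} \<times> {j}) (\<lambda>_. borel))
        (\<lambda>j \<omega>. restrict (\<lambda>k. X k \<omega>) ({..<N} \<times> {j})) UNIV"
      by (rule SR.indep_vars_restrict[OF indep_X]) (auto simp: disjoint_family_on_def)
    then have "SR.indep_vars (\<lambda>_. borel)
        (\<lambda>j \<omega>. (\<lambda>f. (\<Sum>k\<in>{..<N} \<times> {j}. f k) / real N) (restrict (\<lambda>k. X k \<omega>) ({..<N} \<times> {j}))) UNIV"
      by (rule SR.indep_vars_compose2) measurable
    moreover have "(\<lambda>j \<omega>. (\<lambda>f. (\<Sum>k\<in>{..<N} \<times> {j}. f k) / real N) (restrict (\<lambda>k. X k \<omega>) ({..<N} \<times> {j}))) = Z"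
      by (auto simp: Z_def fun_eq_iff intro!: sum.cong)
    ultimately show ?thesis by simp
  qed
  have "aggregate N \<sigma> gbar \<omega> $ j = Z j \<omega>" for \<omega> j
    by (simp add: aggregate_def dither_estimate_def split_beta Z_def X_def g_def sum_coord)
  then have "aggregate N \<sigma> gbar = (\<lambda>\<omega>. \<chi> j. Z j \<omega>)"
    by (simp add: fun_eq_iff vec_eq_iff)
  then show ?thesis
    using SR.distr_vec_indep_normal[OF _ indep_Z Z] \<sigma> N by simp
qed

section \<open>Poisson subsampling\<close>

lemma sets_PiM_finite_pmf:
  fixes q :: "'b::finite pmf"
  assumes K: "finite K"
  shows "sets (PiM K (\<lambda>_. measure_pmf q)) = Pow (space (PiM K (\<lambda>_. measure_pmf q)))"
proof -
  let ?M = "PiM K (\<lambda>_. measure_pmf q)"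
  have "A \<in> sets ?M" if A: "A \<subseteq> space ?M" for A
  proof -
    have "finite A"
      using A K by (auto simp: space_PiM finite_PiE intro: finite_subset)
    moreover have "{x} \<in> sets ?M" if "x \<in> space ?M" for x
    proof -
      have "{x} = PiE K (\<lambda>k. {x k})"
        using that by (auto simp: space_PiM PiE_iff extensional_def fun_eq_iff) metis
      then show ?thesis using K by (auto intro: sets_PiM_I_finite)
    qed
    ultimately have "(\<Union>x\<in>A. {x}) \<in> sets ?M"
      using A by (intro sets.finite_UN) auto
    then show ?thesis by simp
  qed
  then show ?thesis using sets.sets_into_space by blast
qed

lemma borel_measurable_PiM_finite_pmf:
  fixes q :: "'b::finite pmf" and f :: "_ \<Rightarrow> 'c::topological_space"
  assumes "finite K"
  shows "f \<in> borel_measurable (PiM K (\<lambda>_. measure_pmf q))"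
proof -
  have "measurable (PiM K (\<lambda>_. measure_pmf q)) (borel :: 'c measure)
      = measurable (count_space (space (PiM K (\<lambda>_. measure_pmf q)))) borel"
    by (rule measurable_cong_sets) (simp_all add: sets_PiM_finite_pmf[OF assms])
  then show ?thesis
    by (simp only:) (rule measurable_count_space_eq1[THEN iffD2], simp)
qed

lemma integrable_PiM_finite_pmf:
  fixes q :: "'b::finite pmf" and f :: "_ \<Rightarrow> real"
  assumes K: "finite K"
  shows "integrable (PiM K (\<lambda>_. measure_pmf q)) f"
proof -
  let ?M = "PiM K (\<lambda>_. measure_pmf q)"
  interpret prob_space ?M by (intro prob_space_PiM measure_pmf.prob_space_axioms)
  have "finite (space ?M)" using K by (simp add: space_PiM finite_PiE)
  then show ?thesis
    by (intro integrable_const_bound[where B="Max ((\<lambda>x. norm (f x)) ` space ?M)"] AE_I2)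
       (auto intro: borel_measurable_PiM_finite_pmf[OF K])
qed

lemma integral_PiM_bernoulli_insert:
  fixes f :: "_ \<Rightarrow> real"
  assumes "finite K" "c \<notin> K" "0 \<le> p" "p \<le> 1"
  shows "(\<integral>b. f b \<partial>PiM (insert c K) (\<lambda>_. measure_pmf (bernoulli_pmf p)))
       = (\<integral>x. (1 - p) * f (x(c := False)) + p * f (x(c := True)) \<partial>PiM K (\<lambda>_. measure_pmf (bernoulli_pmf p)))"
proof -
  interpret product_sigma_finite "\<lambda>_. measure_pmf (bernoulli_pmf p)"
    by (intro product_sigma_finite.intro) (simp add: measure_pmf.sigma_finite_measure_axioms)
  show ?thesis
    using assms
    by (subst product_integral_insert) (auto intro!: integrable_PiM_finite_pmf integral_cong simp: algebra_simps)
qed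

lemma finite_mask_index: "finite {(i, k). i < N \<and> k < length ((D :: nat \<Rightarrow> 'd list) i)}"
proof -
  have "{(i, k). i < N \<and> k < length (D i)} = Sigma {..<N} (\<lambda>i. {..<length (D i)})" by auto
  then show ?thesis by simp
qed

definition mean_local_grad :: "real \<Rightarrow> real \<Rightarrow> ('d \<Rightarrow> real ^ 'm::finite) \<Rightarrow> (nat \<Rightarrow> 'd list) \<Rightarrow> nat \<Rightarrow>
    ((nat \<times> nat) \<Rightarrow> bool) \<Rightarrow> real ^ 'm" where
  "mean_local_grad C B grad D N b = (1 / real N) *\<^sub>R (\<Sum>i<N. local_grad C B grad D b i)"

lemma emeasure_mechanism:
  fixes grad :: "'d \<Rightarrow> real ^ 'm::finite"
  assumes \<sigma>: "0 < \<sigma>" and N: "N \<ge> 1" and S: "S \<in> sets borel"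
  shows "emeasure (mechanism N C \<sigma> p B grad D) S
       = (\<integral>\<^sup>+b. emeasure (gaussian_vec (mean_local_grad C B grad D N b) (\<sigma> / sqrt (real N))) S
           \<partial>poisson_masks p N D)"
proof -
  let ?MK = "poisson_masks p N D"
  let ?SR = "shared_rand N \<sigma> :: ((nat \<times> 'm) \<Rightarrow> real \<times> real) measure"
  let ?F = "\<lambda>(b, \<omega>). aggregate N \<sigma> (local_grad C B grad D b) \<omega>"
  interpret SR: prob_space ?SR by (rule prob_space_shared_rand[OF \<sigma>])
  have fin: "finite (space ?MK)"
    using finite_mask_index[of N D] by (simp add: poisson_masks_def space_PiM finite_PiE)
  have "sets ?MK = sets (count_space (space ?MK))"
    unfolding poisson_masks_def by (simp add: sets_PiM_finite_pmf[OF finite_mask_index])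
  then have "sets (?MK \<Otimes>\<^sub>M ?SR) = sets (count_space (space ?MK) \<Otimes>\<^sub>M ?SR)"
    by (intro sets_pair_measure_cong refl)
  moreover have "?F \<in> borel_measurable (count_space (space ?MK) \<Otimes>\<^sub>M ?SR)"
    using fin by (intro measurable_pair_measure_countable1 countable_finite) simp_all
  ultimately have F: "?F \<in> borel_measurable (?MK \<Otimes>\<^sub>M ?SR)"
    by (simp cong: measurable_cong_sets)
  have "emeasure (mechanism N C \<sigma> p B grad D) S
      = emeasure (?MK \<Otimes>\<^sub>M ?SR) (?F -` S \<inter> space (?MK \<Otimes>\<^sub>M ?SR))"
    unfolding mechanism_def by (rule emeasure_distr[OF F S])
  also have "\<dots> = (\<integral>\<^sup>+b. emeasure ?SR (Pair b -` (?F -` S \<inter> space (?MK \<Otimes>\<^sub>M ?SR))) \<partial>?MK)"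
    by (rule SR.emeasure_pair_measure_alt) (rule measurable_sets[OF F S])
  also have "\<dots> = (\<integral>\<^sup>+b. emeasure (distr ?SR borel (aggregate N \<sigma> (local_grad C B grad D b))) S \<partial>?MK)"
  proof (rule nn_integral_cong)
    fix b assume "b \<in> space ?MK"
    then have "Pair b -` (?F -` S \<inter> space (?MK \<Otimes>\<^sub>M ?SR)) = aggregate N \<sigma> (local_grad C B grad D b) -` S \<inter> space ?SR"
      by (auto simp: space_pair_measure)
    then show "emeasure ?SR (Pair b -` (?F -` S \<inter> space (?MK \<Otimes>\<^sub>M ?SR)))
        = emeasure (distr ?SR borel (aggregate N \<sigma> (local_grad C B grad D b))) S"
      using S by (simp add: emeasure_distr)
  qed
  finally show ?thesis
    by (simp add: distr_aggregate[OF \<sigma> N] mean_local_grad_def)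
qed

lemma measure_mechanism:
  fixes grad :: "'d \<Rightarrow> real ^ 'm::finite"
  assumes \<sigma>: "0 < \<sigma>" and N: "N \<ge> 1" and S: "S \<in> sets borel"
  shows "measure (mechanism N C \<sigma> p B grad D) S
       = (\<integral>b. measure (gaussian_vec (mean_local_grad C B grad D N b) (\<sigma> / sqrt (real N))) S
           \<partial>poisson_masks p N D)"
proof -
  have s: "0 < \<sigma> / sqrt (real N)" using \<sigma> N by simp
  have "emeasure (mechanism N C \<sigma> p B grad D) S
      = (\<integral>\<^sup>+b. ennreal (measure (gaussian_vec (mean_local_grad C B grad D N b) (\<sigma> / sqrt (real N))) S)
          \<partial>poisson_masks p N D)"
    unfolding emeasure_mechanism[OF \<sigma> N S]
    by (intro nn_integral_cong finite_measure.emeasure_eq_measure prob_space.axioms(1)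
        prob_space_gaussian_vec s)
  also have "\<dots> = ennreal (\<integral>b. measure (gaussian_vec (mean_local_grad C B grad D N b) (\<sigma> / sqrt (real N))) S
      \<partial>poisson_masks p N D)"
    unfolding poisson_masks_def
    by (intro nn_integral_eq_integral integrable_PiM_finite_pmf finite_mask_index) simp
  finally show ?thesis
    by (simp add: measure_def)
qed

lemma norm_clip_le:
  assumes "0 < C"
  shows "norm (clip C x) \<le> C"
proof (cases "norm x \<le> C")
  case True
  then have "max 1 (norm x / C) = 1" using assms by (simp add: max_def field_simps)
  then show ?thesis using True by (simp add: clip_def)
next
  case False
  then have "max 1 (norm x / C) = norm x / C" using assms by (simp add: max_def field_simps)
  then show ?thesis using False assms by (simp add: clip_def)
qed

lemma mean_local_grad_replace:
  fixes grad :: "'d \<Rightarrow> real ^ 'm::finite" and D D' :: "nat \<Rightarrow> 'd list" and b :: "nat \<times> nat \<Rightarrow> bool"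
  assumes i0: "i0 < N" and k0: "k0 < length (D i0)" and D'_i0: "D' i0 = (D i0)[k0 := d']"
    and D'_i: "\<And>i. i < N \<Longrightarrow> i \<noteq> i0 \<Longrightarrow> D' i = D i"
  defines "b0 \<equiv> b((i0, k0) := False)" and "b1 \<equiv> b((i0, k0) := True)"
  shows "mean_local_grad C B grad D' N b0 = mean_local_grad C B grad D N b0"
    and "mean_local_grad C B grad D N b1
           = mean_local_grad C B grad D N b0 + (1 / (real N * B)) *\<^sub>R clip C (grad (D i0 ! k0))"
    and "mean_local_grad C B grad D' N b1
           = mean_local_grad C B grad D N b0 + (1 / (real N * B)) *\<^sub>R clip C (grad d')"
proof -
  have mean: "mean_local_grad C B grad X N bb = mean_local_grad C B grad D N b0
      + (1 / real N) *\<^sub>R (local_grad C B grad X bb i0 - local_grad C B grad D b0 i0)"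
    if X: "X = D \<or> X = D'" and bb: "bb = b0 \<or> bb = b1" for X bb
  proof -
    have "local_grad C B grad X bb i = local_grad C B grad D b0 i" if i: "i \<in> {..<N} - {i0}" for i
    proof -
      have "X i = D i" using i X D'_i by auto
      moreover have "bb (i, k) = b0 (i, k)" for k using i bb by (auto simp: b0_def b1_def)
      ultimately show ?thesis by (simp add: local_grad_def)
    qed
    then have "(\<Sum>i\<in>{..<N} - {i0}. local_grad C B grad X bb i) = (\<Sum>i\<in>{..<N} - {i0}. local_grad C B grad D b0 i)"
      by (rule sum.cong[OF refl])
    moreover have "(\<Sum>i<N. f i) = f i0 + (\<Sum>i\<in>{..<N} - {i0}. f i)" for f :: "nat \<Rightarrow> real ^ 'm"
      using i0 by (simp add: sum.remove)
    ultimately show ?thesis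
      unfolding mean_local_grad_def by (simp add: scaleR_add_right scaleR_diff_right)
  qed
  define T where "T = {k. k < length (D i0) \<and> b0 (i0, k)}"
  have "k0 \<notin> T" "finite T" by (simp_all add: T_def b0_def)
  moreover have "{k. k < length (D i0) \<and> b1 (i0, k)} = insert k0 T"
    using k0 by (auto simp: T_def b0_def b1_def)
  moreover have "(\<Sum>k\<in>T. clip C (grad (D' i0 ! k))) = (\<Sum>k\<in>T. clip C (grad (D i0 ! k)))"
    by (intro sum.cong) (auto simp: D'_i0 T_def b0_def split: if_splits)
  moreover have "D' i0 ! k0 = d'"
    using k0 by (simp add: D'_i0)
  moreover have len: "length (D' i0) = length (D i0)"
    by (simp add: D'_i0)
  ultimately have L0: "local_grad C B grad D' b0 i0 = local_grad C B grad D b0 i0"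
    and L1: "local_grad C B grad D b1 i0 = local_grad C B grad D b0 i0 + (1 / B) *\<^sub>R clip C (grad (D i0 ! k0))"
    and L1': "local_grad C B grad D' b1 i0 = local_grad C B grad D b0 i0 + (1 / B) *\<^sub>R clip C (grad d')"
    unfolding local_grad_def len T_def[symmetric] by (simp_all add: scaleR_add_right)
  show "mean_local_grad C B grad D' N b0 = mean_local_grad C B grad D N b0"
    using mean[of D' b0] L0 by simp
  show "mean_local_grad C B grad D N b1
      = mean_local_grad C B grad D N b0 + (1 / (real N * B)) *\<^sub>R clip C (grad (D i0 ! k0))"
    using mean[of D b1] L1 by simp
  show "mean_local_grad C B grad D' N b1
      = mean_local_grad C B grad D N b0 + (1 / (real N * B)) *\<^sub>R clip C (grad d')"
    using mean[of D' b1] L1' by simp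
qed

lemma mean_local_grad_neighbour_dist:
  fixes grad :: "'d \<Rightarrow> real ^ 'm::finite" and D D' :: "nat \<Rightarrow> 'd list" and b :: "nat \<times> nat \<Rightarrow> bool"
  assumes C: "0 < C" and NB: "0 < real N * B"
    and i0: "i0 < N" and k0: "k0 < length (D i0)" and D'_i0: "D' i0 = (D i0)[k0 := d']"
    and D'_i: "\<And>i. i < N \<Longrightarrow> i \<noteq> i0 \<Longrightarrow> D' i = D i"
  defines "b0 \<equiv> b((i0, k0) := False)" and "b1 \<equiv> b((i0, k0) := True)"
  shows "norm (mean_local_grad C B grad D N b1 - mean_local_grad C B grad D N b0) \<le> 2 * C / (real N * B)"
    and "norm (mean_local_grad C B grad D N b1 - mean_local_grad C B grad D' N b1) \<le> 2 * C / (real N * B)"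
proof -
  note replace = mean_local_grad_replace[where ?i0.0=i0 and ?k0.0=k0 and N=N and D=D and D'=D' and d'=d'
      and b=b and C=C and B=B and grad=grad, OF i0 k0 D'_i0 D'_i, folded b0_def b1_def]
  have "norm (mean_local_grad C B grad D N b1 - mean_local_grad C B grad D N b0)
      = norm (clip C (grad (D i0 ! k0))) / (real N * B)"
    using NB by (simp add: replace)
  also have "\<dots> \<le> 2 * C / (real N * B)"
    using NB C norm_clip_le[OF C, of "grad (D i0 ! k0)"] by (intro divide_right_mono) auto
  finally show "norm (mean_local_grad C B grad D N b1 - mean_local_grad C B grad D N b0) \<le> 2 * C / (real N * B)" .
  have "norm (mean_local_grad C B grad D N b1 - mean_local_grad C B grad D' N b1)
      = norm (clip C (grad (D i0 ! k0)) - clip C (grad d')) / (real N * B)"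
    using NB by (simp add: replace scaleR_diff_right[symmetric])
  also have "\<dots> \<le> (C + C) / (real N * B)"
    using NB norm_triangle_le_diff[OF add_mono[OF norm_clip_le[OF C] norm_clip_le[OF C]]]
    by (intro divide_right_mono) auto
  finally show "norm (mean_local_grad C B grad D N b1 - mean_local_grad C B grad D' N b1) \<le> 2 * C / (real N * B)"
    by simp
qed

text \<open>Amplification by subsampling: G1 is the output probability when the sample is in the batch
  (probability p), G0 when it is not, and G1' when it is in the batch but replaced; G0 needs no
  primed version because without the sample both datasets give the same output.\<close>

lemma subsampling_mixture_le:
  fixes p e G0 G1 G1' \<delta> :: real
  assumes p: "0 \<le> p" "p \<le> 1" and e: "1 \<le> e" and G: "0 \<le> G0" "0 \<le> G1" "0 \<le> G1'"
    and h1: "G1 \<le> e * G0 + \<delta>" and h2: "G1 \<le> e * G1' + \<delta>"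
  shows "(1 - p) * G0 + p * G1 \<le> (1 + p * (e - 1)) * ((1 - p) * G0 + p * G1') + p * \<delta>"
proof -
  define E where "E = 1 + p * (e - 1)"
  have E1: "1 \<le> E" using p e by (simp add: E_def)
  have "p * (e - 1) \<le> e - 1" using p e by (intro mult_left_le_one_le) auto
  then have Ee: "E \<le> e" unfolding E_def by linarith
  have "(e - E) * G1 \<le> (e - E) * (e * G0 + \<delta>)" using Ee h1 by (intro mult_left_mono) auto
  moreover have "E * G1 \<le> E * (e * G1' + \<delta>)" using E1 h2 by (intro mult_left_mono) auto
  ultimately have "e * G1 \<le> e * ((e - E) * G0 + E * G1' + \<delta>)"
    by (simp add: algebra_simps)
  then have "G1 \<le> (e - E) * G0 + E * G1' + \<delta>" using e by simp
  then have "p * G1 \<le> p * ((e - E) * G0 + E * G1' + \<delta>)" using p by (intro mult_left_mono) auto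
  moreover have "(1 - p) * G0 + p * ((e - E) * G0 + E * G1' + \<delta>) = E * ((1 - p) * G0 + p * G1') + p * \<delta>"
    unfolding E_def by (simp add: algebra_simps)
  ultimately show ?thesis unfolding E_def by linarith
qed

lemma measure_mechanism_condition:
  fixes grad :: "'d \<Rightarrow> real ^ 'm::finite" and C B :: real
  assumes \<sigma>: "0 < \<sigma>" and N: "N \<ge> 1" and S: "S \<in> sets borel" and p: "0 \<le> p" "p \<le> 1"
    and c: "c \<in> {(i, k). i < N \<and> k < length (D i)}"
  defines "G b \<equiv> measure (gaussian_vec (mean_local_grad C B grad D N b) (\<sigma> / sqrt (real N))) S"
  shows "measure (mechanism N C \<sigma> p B grad D) S
       = (\<integral>x. (1 - p) * G (x(c := False)) + p * G (x(c := True))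
           \<partial>PiM ({(i, k). i < N \<and> k < length (D i)} - {c}) (\<lambda>_. measure_pmf (bernoulli_pmf p)))"
proof -
  define K where "K = {(i, k). i < N \<and> k < length (D i)} - {c}"
  have "poisson_masks p N D = PiM (insert c K) (\<lambda>_. measure_pmf (bernoulli_pmf p))"
    using c by (simp add: poisson_masks_def K_def insert_absorb)
  then have "measure (mechanism N C \<sigma> p B grad D) S
      = (\<integral>b. G b \<partial>PiM (insert c K) (\<lambda>_. measure_pmf (bernoulli_pmf p)))"
    unfolding measure_mechanism[OF \<sigma> N S] G_def by simp
  also have "\<dots> = (\<integral>x. (1 - p) * G (x(c := False)) + p * G (x(c := True))
      \<partial>PiM K (\<lambda>_. measure_pmf (bernoulli_pmf p)))"
    using finite_mask_index[of N D] p by (intro integral_PiM_bernoulli_insert) (auto simp: K_def)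
  finally show ?thesis unfolding K_def .
qed

lemma mechanism_dp:
  fixes grad :: "'d \<Rightarrow> real ^ 'm::finite"
  assumes N: "N \<ge> 1" and C: "0 < C" and \<sigma>: "0 < \<sigma>" and p: "0 < p" "p \<le> 1" and B: "0 < B"
    and \<epsilon>: "0 \<le> \<epsilon>" and nb: "neighbours N D D'" and S: "S \<in> sets borel"
  shows "measure (mechanism N C \<sigma> p B grad D) S
       \<le> (1 + p * (exp \<epsilon> - 1)) * measure (mechanism N C \<sigma> p B grad D') S
         + p * gaussian_delta \<epsilon> (2 * C / (\<sigma> * B * sqrt (real N)))"
proof -
  obtain i0 k0 d' where i0: "i0 < N" and k0: "k0 < length (D i0)" and D'_i0: "D' i0 = (D i0)[k0 := d']"
    and D'_i: "\<And>i. i < N \<Longrightarrow> i \<noteq> i0 \<Longrightarrow> D' i = D i"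
    using nb unfolding neighbours_def by blast
  define s where "s = \<sigma> / sqrt (real N)"
  define \<Delta> where "\<Delta> = 2 * C / (real N * B)"
  define \<delta> where "\<delta> = gaussian_delta \<epsilon> (2 * C / (\<sigma> * B * sqrt (real N)))"
  define E where "E = 1 + p * (exp \<epsilon> - 1)"
  have NB: "0 < real N * B" using N B by simp
  have s: "0 < s" and \<Delta>: "0 < \<Delta>" using N \<sigma> C NB by (simp_all add: s_def \<Delta>_def)
  have "\<Delta> / s = 2 * C / (\<sigma> * B * sqrt (real N))"
  proof -
    have "\<Delta> / s = 2 * C / (sqrt (real N) * sqrt (real N) * B) / (\<sigma> / sqrt (real N))"
      by (simp add: \<Delta>_def s_def)
    also have "\<dots> = 2 * C / (\<sigma> * B * sqrt (real N))"
      using N \<sigma> B by (simp add: field_simps del: real_sqrt_mult_self)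
    finally show ?thesis .
  qed
  define c0 where "c0 = (i0, k0)"
  define K where "K = {(i, k). i < N \<and> k < length (D i)} - {c0}"
  let ?bern = "\<lambda>_ :: nat \<times> nat. measure_pmf (bernoulli_pmf p)"
  define G where "G X b = measure (gaussian_vec (mean_local_grad C B grad X N b) s) S" for X b
  have c0: "c0 \<in> {(i, k). i < N \<and> k < length (D i)}" using i0 k0 by (simp add: c0_def)
  have "length (D' i) = length (D i)" if "i < N" for i
    using that D'_i[of i] D'_i0 by (cases "i = i0") auto
  then have index: "{(i, k). i < N \<and> k < length (D' i)} = {(i, k). i < N \<and> k < length (D i)}"
    by auto
  have mixture: "measure (mechanism N C \<sigma> p B grad X) S
      = (\<integral>x. (1 - p) * G X (x(c0 := False)) + p * G X (x(c0 := True)) \<partial>PiM K ?bern)"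
    if X: "X = D \<or> X = D'" for X
  proof -
    have "c0 \<in> {(i, k). i < N \<and> k < length (X i)}" and "{(i, k). i < N \<and> k < length (X i)} - {c0} = K"
      using X c0 index by (auto simp: K_def)
    then show ?thesis
      using measure_mechanism_condition[OF \<sigma> N S, of p c0 X C B grad] p by (simp add: G_def s_def)
  qed
  have pointwise: "(1 - p) * G D (x(c0 := False)) + p * G D (x(c0 := True))
      \<le> E * ((1 - p) * G D' (x(c0 := False)) + p * G D' (x(c0 := True))) + p * \<delta>" for x
  proof -
    note replace = mean_local_grad_replace[where ?i0.0=i0 and ?k0.0=k0 and N=N and D=D and D'=D' and d'=d'
      and b=x and C=C and B=B and grad=grad, OF i0 k0 D'_i0 D'_i, folded c0_def]
    note dist = mean_local_grad_neighbour_dist[where ?i0.0=i0 and ?k0.0=k0 and N=N and D=D and D'=D'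
      and d'=d' and b=x and C=C and B=B and grad=grad, OF C NB i0 k0 D'_i0 D'_i, folded c0_def \<Delta>_def]
    have unchanged: "G D' (x(c0 := False)) = G D (x(c0 := False))"
      by (simp add: G_def replace(1))
    show ?thesis
      unfolding E_def unchanged
    proof (rule subsampling_mixture_le)
      show "G D (x(c0 := True)) \<le> exp \<epsilon> * G D (x(c0 := False)) + \<delta>"
        and "G D (x(c0 := True)) \<le> exp \<epsilon> * G D' (x(c0 := True)) + \<delta>"
        unfolding G_def \<delta>_def using dist
        by (auto intro!: gaussian_vec_dp_bound s \<Delta> \<epsilon> S simp flip: \<open>\<Delta> / s = _\<close>)
    qed (use p \<epsilon> in \<open>auto simp: G_def\<close>)
  qed
  have integrable: "integrable (PiM K ?bern) f" for f :: "_ \<Rightarrow> real"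
    using finite_mask_index[of N D] by (intro integrable_PiM_finite_pmf) (simp add: K_def)
  interpret prob_space "PiM K ?bern"
    by (intro prob_space_PiM measure_pmf.prob_space_axioms)
  have "measure (mechanism N C \<sigma> p B grad D) S
      \<le> (\<integral>x. E * ((1 - p) * G D' (x(c0 := False)) + p * G D' (x(c0 := True))) + p * \<delta> \<partial>PiM K ?bern)"
    unfolding mixture[OF disjI1[OF refl]] by (intro integral_mono integrable pointwise)
  also have "\<dots> = E * measure (mechanism N C \<sigma> p B grad D') S + p * \<delta>"
    unfolding mixture[OF disjI2[OF refl]] using integrable by (simp add: prob_space)
  finally show ?thesis by (simp add: E_def \<delta>_def)
qed

theorem theorem1:
  fixes N n :: nat and C \<sigma> p B \<epsilon>' :: real
    and grad :: "'d \<Rightarrow> real ^ 'm::finite"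
  assumes "N \<ge> 1" and "n \<ge> 1" and "C > 0" and "\<sigma> > 0" and "0 < p" and "p \<le> 1"
    and "B = p * real n" and "\<epsilon>' > 0"
  shows "(\<forall>gbar :: nat \<Rightarrow> real ^ 'm.
            distr (shared_rand N \<sigma>) borel (aggregate N \<sigma> gbar)
              = gaussian_vec ((1 / real N) *\<^sub>R (\<Sum>i<N. gbar i)) (\<sigma> / sqrt (real N)))
       \<and> (\<forall>D D' S. (\<forall>i<N. length (D i) = n) \<longrightarrow> neighbours N D D' \<longrightarrow> S \<in> sets borel \<longrightarrow>
            measure (mechanism N C \<sigma> p B grad D) S
              \<le> exp (ln (1 + p * (exp \<epsilon>' - 1))) * measure (mechanism N C \<sigma> p B grad D') S
                + (p * Phi (C / (\<sigma> * B * sqrt (real N)) - \<epsilon>' * \<sigma> * B * sqrt (real N) / (2 * C))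
                   - p * exp \<epsilon>' * Phi (- C / (\<sigma> * B * sqrt (real N)) - \<epsilon>' * \<sigma> * B * sqrt (real N) / (2 * C))))"
proof (intro conjI allI impI)
  fix gbar :: "nat \<Rightarrow> real ^ 'm"
  show "distr (shared_rand N \<sigma>) borel (aggregate N \<sigma> gbar)
      = gaussian_vec ((1 / real N) *\<^sub>R (\<Sum>i<N. gbar i)) (\<sigma> / sqrt (real N))"
    using assms(4,1) by (rule distr_aggregate)
next
  fix D D' :: "nat \<Rightarrow> 'd list" and S :: "(real ^ 'm) set"
  assume "neighbours N D D'" and "S \<in> sets borel"
  \<comment> \<open>The dataset sizes enter the bound only through B > 0.\<close>
  have B: "0 < B" using assms by simp
  have dp: "measure (mechanism N C \<sigma> p B grad D) S
      \<le> (1 + p * (exp \<epsilon>' - 1)) * measure (mechanism N C \<sigma> p B grad D') S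
        + p * gaussian_delta \<epsilon>' (2 * C / (\<sigma> * B * sqrt (real N)))"
    using assms(8) by (intro mechanism_dp assms(1,3,4,5,6) B \<open>neighbours N D D'\<close> \<open>S \<in> sets borel\<close>) simp
  have delta: "p * gaussian_delta \<epsilon>' (2 * C / (\<sigma> * B * sqrt (real N)))
      = p * Phi (C / (\<sigma> * B * sqrt (real N)) - \<epsilon>' * \<sigma> * B * sqrt (real N) / (2 * C))
        - p * exp \<epsilon>' * Phi (- C / (\<sigma> * B * sqrt (real N)) - \<epsilon>' * \<sigma> * B * sqrt (real N) / (2 * C))"
  proof -
    have "2 * C / (\<sigma> * B * sqrt (real N)) / 2 = C / (\<sigma> * B * sqrt (real N))"
      and "- (2 * C / (\<sigma> * B * sqrt (real N))) / 2 = - C / (\<sigma> * B * sqrt (real N))"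
      and "\<epsilon>' / (2 * C / (\<sigma> * B * sqrt (real N))) = \<epsilon>' * \<sigma> * B * sqrt (real N) / (2 * C)"
      by simp_all
    then show ?thesis
      unfolding gaussian_delta_def by (simp only: right_diff_distrib mult.assoc)
  qed
  have exp_ln: "exp (ln (1 + p * (exp \<epsilon>' - 1))) = 1 + p * (exp \<epsilon>' - 1)"
    using assms by (intro exp_ln) (simp add: add_pos_nonneg)
  show "measure (mechanism N C \<sigma> p B grad D) S
      \<le> exp (ln (1 + p * (exp \<epsilon>' - 1))) * measure (mechanism N C \<sigma> p B grad D') S
        + (p * Phi (C / (\<sigma> * B * sqrt (real N)) - \<epsilon>' * \<sigma> * B * sqrt (real N) / (2 * C))
           - p * exp \<epsilon>' * Phi (- C / (\<sigma> * B * sqrt (real N)) - \<epsilon>' * \<sigma> * B * sqrt (real N) / (2 * C)))"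
    unfolding exp_ln using dp delta by linarith
qed

end
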